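(* Let $B$ be an S-open subset of ${}^*\mathbb{C}^n$, $a\in B$ a bounded point, and $f:B\to{}^*\mathbb{C}$ an internal holomorphic function on $B$ which is bounded at every point of the halo $\mu(a)$. Then there exists an S-open neighbourhood $V$ of $a$ such that: (i) $f$ is S-continuous at every point of $V$; (ii) there is a holomorphic function ${}^\circ f:{}^\circ V\to\mathbb{C}$ such that $f(z)\approx{}^\circ f({}^\circ z)$ for the points $z\in V$ with ${}^\circ z\in{}^\circ V$, and ${}^\circ(\partial^\alpha f)=\partial^\alpha({}^\circ f)$ for every $\alpha\in\mathbb{N}^n$; (iii) if ${}^\circ f$ is not constant on ${}^\circ V$, then $f(\mu(a))=\mu(f(a))$.
   Context: ${}^*\mathbb{C}$ is the ultrapower of $\mathbb{C}$ by a nonprincipal ultrafilter $\mathcal{U}$ on $\mathbb{N}$. A point of ${}^*\mathbb{C}^n$ is bounded if its coordinates have modulus $\le r$ for some standard real $r$; bounded points $z$ have a standard part ${}^\circ z\in\mathbb{C}^n$; $x\approx y$ means $|x-y|$ is infinitesimal, and $\mu(x)=\{y: y\approx x\}$. The S-topology on ${}^*\mathbb{C}^n$ has basis the S-balls $\{q: {}^\circ|q-p|<r\}$ ($p\in{}^*\mathbb{C}^n$, $r>0$ standard real). An internal function $f=[f_i]$ on an internal set $D=[D_i]\subset{}^*\mathbb{C}^n$ is internal holomorphic if $\{i: D_i \text{ open and } f_i \text{ holomorphic on } D_i\}\in\mathcal{U}$; $\partial^\alpha f:=[\partial^\alpha f_i]$. $f$ is S-continuous at $z$ if $f(\mu(z))\subset\mu(f(z))$.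 For $V\subset{}^*\mathbb{C}^n$, ${}^\circ V=\{x\in\mathbb{C}^n:\mu(x)\cap V\neq\emptyset\}$. For a function $g$ bounded and S-continuous near a standard point $x$, ${}^\circ g(x)$ is the standard part of $g(x)$. *)

theory Defs
  imports "HOL-Analysis.Analysis"
begin

definition nonprincipal_ultrafilter :: "nat set set \<Rightarrow> bool" where
  "nonprincipal_ultrafilter U \<longleftrightarrow>
     (\<forall>A B. A \<in> U \<longrightarrow> A \<subseteq> B \<longrightarrow> B \<in> U) \<and>
     (\<forall>A B. A \<in> U \<longrightarrow> B \<in> U \<longrightarrow> A \<inter> B \<in> U) \<and>
     {} \<notin> U \<and>
     (\<forall>A. A \<in> U \<or> - A \<in> U) \<and>
     (\<forall>A. finite A \<longrightarrow> A \<notin> U)"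

text \<open>Elements of the ultrapower are represented by sequences; two sequences
  represent the same element iff they agree on a set in U.\<close>
definition eqU :: "nat set set \<Rightarrow> (nat \<Rightarrow> 'a) \<Rightarrow> (nat \<Rightarrow> 'a) \<Rightarrow> bool" where
  "eqU U x y \<longleftrightarrow> {i. x i = y i} \<in> U"

definition hstar :: "'a \<Rightarrow> nat \<Rightarrow> 'a" where
  "hstar x = (\<lambda>_. x)"

definition hbounded :: "nat set set \<Rightarrow> (nat \<Rightarrow> 'a::real_normed_vector) \<Rightarrow> bool" where
  "hbounded U s \<longleftrightarrow> (\<exists>r::real. {i. norm (s i) \<le> r} \<in> U)"

definition hinfinitesimal :: "nat set set \<Rightarrow> (nat \<Rightarrow> 'a::real_normed_vector) \<Rightarrow> bool" where
  "hinfinitesimal U s \<longleftrightarrow> (\<forall>e::real. e > 0 \<longrightarrow> {i. norm (s i) < e} \<in> U)"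

definition happrox :: "nat set set \<Rightarrow> (nat \<Rightarrow> 'a::real_normed_vector) \<Rightarrow> (nat \<Rightarrow> 'a) \<Rightarrow> bool" where
  "happrox U x y \<longleftrightarrow> hinfinitesimal U (\<lambda>i. x i - y i)"

definition hst :: "nat set set \<Rightarrow> (nat \<Rightarrow> 'a::real_normed_vector) \<Rightarrow> 'a" where
  "hst U s = (THE c. happrox U s (hstar c))"

definition halo :: "nat set set \<Rightarrow> (nat \<Rightarrow> 'a::real_normed_vector) \<Rightarrow> (nat \<Rightarrow> 'a) set" where
  "halo U x = {y. happrox U y x}"

definition Sball :: "nat set set \<Rightarrow> (nat \<Rightarrow> 'a::real_normed_vector) \<Rightarrow> real \<Rightarrow> (nat \<Rightarrow> 'a) set" where
  "Sball U p r = {q. hbounded U (\<lambda>i. norm (q i - p i)) \<and> hst U (\<lambda>i. norm (q i - p i)) < r}"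

definition Sopen :: "nat set set \<Rightarrow> (nat \<Rightarrow> 'a::real_normed_vector) set \<Rightarrow> bool" where
  "Sopen U B \<longleftrightarrow> (\<forall>p\<in>B. \<exists>r>0. Sball U p r \<subseteq> B)"

definition shadow :: "nat set set \<Rightarrow> (nat \<Rightarrow> 'a::real_normed_vector) set \<Rightarrow> 'a set" where
  "shadow U V = {x. halo U (hstar x) \<inter> V \<noteq> {}}"

definition internal_set :: "nat set set \<Rightarrow> (nat \<Rightarrow> 'a set) \<Rightarrow> (nat \<Rightarrow> 'a) set" where
  "internal_set U D = {z. {i. z i \<in> D i} \<in> U}"

definition happ :: "(nat \<Rightarrow> 'a \<Rightarrow> 'b) \<Rightarrow> (nat \<Rightarrow> 'a) \<Rightarrow> nat \<Rightarrow> 'b" where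
  "happ f z = (\<lambda>i. f i (z i))"

definition Scont_at :: "nat set set \<Rightarrow> (nat \<Rightarrow> 'a) set \<Rightarrow> (nat \<Rightarrow> 'a::real_normed_vector \<Rightarrow> 'b::real_normed_vector)
    \<Rightarrow> (nat \<Rightarrow> 'a) \<Rightarrow> bool" where
  "Scont_at U Dom f z \<longleftrightarrow> (\<forall>w\<in>Dom. happrox U w z \<longrightarrow> happrox U (happ f w) (happ f z))"

definition holo_on :: "(complex ^ 'n) set \<Rightarrow> (complex ^ 'n \<Rightarrow> complex) \<Rightarrow> bool" where
  "holo_on S g \<longleftrightarrow> (\<forall>z\<in>S. \<exists>L. (g has_derivative L) (at z) \<and> (\<forall>c v. L (c *s v) = c * L v))"

definition internal_holomorphic ::
  "nat set set \<Rightarrow> (nat \<Rightarrow> (complex ^ 'n) set) \<Rightarrow> (nat \<Rightarrow> complex ^ 'n \<Rightarrow> complex) \<Rightarrow> bool" where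
  "internal_holomorphic U D f \<longleftrightarrow> {i. open (D i) \<and> holo_on (D i) (f i)} \<in> U"

definition cpartial :: "'n::finite \<Rightarrow> (complex ^ 'n \<Rightarrow> complex) \<Rightarrow> complex ^ 'n \<Rightarrow> complex" where
  "cpartial j g z = deriv (\<lambda>w. g (z + (\<chi> k. if k = j then w else 0))) 0"

primrec pd_list :: "('n::finite \<Rightarrow> nat) \<Rightarrow> 'n list \<Rightarrow> (complex ^ 'n \<Rightarrow> complex) \<Rightarrow> complex ^ 'n \<Rightarrow> complex" where
  "pd_list \<alpha> [] g = g"
| "pd_list \<alpha> (j # js) g = (cpartial j ^^ \<alpha> j) (pd_list \<alpha> js g)"

definition pdiff :: "('n::finite \<Rightarrow> nat) \<Rightarrow> (complex ^ 'n \<Rightarrow> complex) \<Rightarrow> complex ^ 'n \<Rightarrow> complex" where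
  "pdiff \<alpha> g = pd_list \<alpha> (SOME xs. distinct xs \<and> set xs = UNIV) g"

end

theory Submission
  imports Defs "HOL-Complex_Analysis.Complex_Analysis"
begin

text \<open>On a set of indices in the ultrafilter, the \<open>f i\<close> are holomorphic on balls of a common
  standard radius \<open>R\<close> around \<open>a i\<close> and bounded there by a common standard constant; otherwise a
  diagonal choice produces a point of the halo of \<open>a\<close> at which \<open>f\<close> is unbounded. Cauchy estimates
  then give Lipschitz and second-order Taylor bounds that are uniform in \<open>i\<close>, so the pointwise
  standard part \<open>x \<mapsto> st (f i x)\<close> is holomorphic, \<open>f\<close> is S-continuous on the S-ball of radius
  \<open>R\<close>, and standard parts commute with partial derivatives. If the standard part \<open>g\<close> is not
  constant, \<open>g a0\<close> is an isolated value of \<open>g\<close> on some complex line through \<open>a0\<close>; for \<open>w \<approx> f a\<close>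
  a minimum modulus argument on circles of standard radius \<open>\<rho>\<close> around \<open>a i\<close> in that direction
  gives a solution of \<open>f i z = w i\<close> with \<open>|z - a i| \<le> \<rho>\<close>, and letting \<open>\<rho>\<close> shrink along a diagonal
  yields such a \<open>z\<close> in the halo of \<open>a\<close>.\<close>

lemma norm_smult_vec: "norm (c *s (x::complex^'n)) = norm c * norm x"
proof -
  have "norm (c *s x) = L2_set (\<lambda>i. norm c * norm (x $ i)) UNIV"
    by (simp add: norm_vec_def norm_mult)
  also have "\<dots> = norm c * L2_set (\<lambda>i. norm (x $ i)) UNIV"
    by (simp add: L2_set_right_distrib)
  finally show ?thesis by (simp add: norm_vec_def)
qed

lemma norm_axis_complex_1 [simp]: "norm (axis j (1::complex) :: complex^'n) = 1"
proof -
  have "axis j (1::complex) \<in> (Basis :: (complex^'n) set)"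
    unfolding Basis_vec_def by (auto simp: Basis_complex_def)
  then show ?thesis by (simp add: norm_Basis)
qed

lemma scaleR_eq_of_real_smult_vec: "c *\<^sub>R (v::complex^'n) = complex_of_real c *s v"
  by (simp only: vec_eq_iff vector_scaleR_component vector_smult_component) (simp add: scaleR_conv_of_real)

lemma bounded_linear_smult_vec_left: "bounded_linear (\<lambda>t::complex. t *s (u::complex^'n))"
  unfolding linear_conv_bounded_linear[symmetric]
  by (rule linearI) (simp_all add: vec_eq_iff algebra_simps mult_scaleR_left)

definition cdir_deriv :: "(complex^'n \<Rightarrow> complex) \<Rightarrow> complex^'n \<Rightarrow> complex^'n \<Rightarrow> complex" where
  "cdir_deriv F y u = deriv (\<lambda>t. F (y + t *s u)) 0"

lemma cpartial_eq_cdir_deriv: "cpartial j F z = cdir_deriv F z (axis j 1)"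
proof -
  have "(\<lambda>w. F (z + (\<chi> k. if k = j then w else 0))) = (\<lambda>w. F (z + w *s axis j 1))"
    by (intro ext arg_cong[where f=F] arg_cong[where f="\<lambda>v. z + v"]) (simp add: vec_eq_iff axis_def)
  then show ?thesis by (simp add: cpartial_def cdir_deriv_def)
qed

lemma has_field_derivative_along_line:
  fixes F :: "complex^'n \<Rightarrow> complex"
  assumes "(F has_derivative L) (at (y + t0 *s u))" "\<And>c v. L (c *s v) = c * L v"
  shows "((\<lambda>t. F (y + t *s u)) has_field_derivative L u) (at t0)"
proof -
  have "((\<lambda>t. y + t *s u) has_derivative (\<lambda>t. t *s u)) (at t0)"
    using bounded_linear_smult_vec_left[of u]
    by (auto intro!: derivative_eq_intros bounded_linear_imp_has_derivative)
  from has_derivative_compose[OF this assms(1)]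
  have "((\<lambda>t. F (y + t *s u)) has_derivative (\<lambda>t. L (t *s u))) (at t0)" by (simp add: o_def)
  moreover have "(\<lambda>t. L (t *s u)) = (*) (L u)" using assms(2) by (auto simp: mult.commute)
  ultimately show ?thesis by (simp add: has_field_derivative_def)
qed

lemma holo_on_subset: "holo_on S F \<Longrightarrow> T \<subseteq> S \<Longrightarrow> holo_on T F"
  unfolding holo_on_def by blast

lemma holo_on_imp_continuous_on:
  fixes F :: "complex^'n \<Rightarrow> complex"
  assumes "holo_on S F" shows "continuous_on S F"
proof (rule continuous_at_imp_continuous_on, rule ballI)
  fix y assume "y \<in> S"
  then obtain L where "(F has_derivative L) (at y)" using assms unfolding holo_on_def by blast
  then show "isCont F y" by (rule has_derivative_continuous)
qed

lemma holomorphic_on_line: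
  fixes F :: "complex^'n \<Rightarrow> complex"
  assumes "holo_on S F"
  shows "(\<lambda>t. F (y + t *s u)) holomorphic_on {t. y + t *s u \<in> S}"
  unfolding holomorphic_on_def
proof
  fix t assume "t \<in> {t. y + t *s u \<in> S}"
  then obtain L where "(F has_derivative L) (at (y + t *s u))" "\<forall>c v. L (c *s v) = c * L v"
    using assms unfolding holo_on_def by blast
  then have "((\<lambda>t. F (y + t *s u)) has_field_derivative L u) (at t)"
    by (intro has_field_derivative_along_line) auto
  then show "(\<lambda>t. F (y + t *s u)) field_differentiable at t within {t. y + t *s u \<in> S}"
    by (meson field_differentiable_at_within field_differentiable_def)
qed

lemma holo_on_has_derivative_cdir_deriv:
  fixes F :: "complex^'n \<Rightarrow> complex"
  assumes "holo_on S F" "y \<in> S"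
  shows "(F has_derivative cdir_deriv F y) (at y)"
    and "\<And>c v. cdir_deriv F y (c *s v) = c * cdir_deriv F y v"
proof -
  obtain L where L: "(F has_derivative L) (at y)" "\<forall>c v. L (c *s v) = c * L v"
    using assms unfolding holo_on_def by blast
  have "cdir_deriv F y u = L u" for u
  proof -
    have "((\<lambda>t. F (y + t *s u)) has_field_derivative L u) (at 0)"
      using L by (intro has_field_derivative_along_line) auto
    then show ?thesis unfolding cdir_deriv_def by (rule DERIV_imp_deriv)
  qed
  then have "cdir_deriv F y = L" by auto
  then show "(F has_derivative cdir_deriv F y) (at y)" "\<And>c v. cdir_deriv F y (c *s v) = c * cdir_deriv F y v"
    using L by auto
qed

lemma holo_on_difference_quotient:
  fixes F :: "complex^'n \<Rightarrow> complex"
  assumes "holo_on S F" "\<And>w. w \<in> T \<Longrightarrow> w + h \<in> S" "T \<subseteq> S"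
  shows "holo_on T (\<lambda>w. (F (w + h) - F w) / e)"
  unfolding holo_on_def
proof
  fix w assume w: "w \<in> T"
  obtain L1 where L1: "(F has_derivative L1) (at (w + h))" "\<forall>a v. L1 (a *s v) = a * L1 v"
    using assms(1) assms(2)[OF w] unfolding holo_on_def by blast
  obtain L2 where L2: "(F has_derivative L2) (at w)" "\<forall>a v. L2 (a *s v) = a * L2 v"
    using assms(1,3) w unfolding holo_on_def by blast
  have "((\<lambda>w. F (w + h)) has_derivative L1) (at w)"
    using has_derivative_compose[OF has_derivative_add_const[OF has_derivative_ident] L1(1)]
    by (simp add: o_def)
  from has_derivative_mult_right[OF has_derivative_diff[OF this L2(1)], of "inverse e"]
  have "((\<lambda>w. (F (w + h) - F w) / e) has_derivative (\<lambda>v. (L1 v - L2 v) / e)) (at w)"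
    by (simp add: divide_inverse mult.commute)
  moreover have "\<forall>a v. (L1 (a *s v) - L2 (a *s v)) / e = a * ((L1 v - L2 v) / e)"
    using L1(2) L2(2) by (simp add: algebra_simps)
  ultimately show "\<exists>L. ((\<lambda>w. (F (w + h) - F w) / e) has_derivative L) (at w) \<and> (\<forall>a v. L (a *s v) = a * L v)"
    by blast
qed

lemma cpartial_cong_open:
  fixes K K' :: "complex^'n \<Rightarrow> complex"
  assumes "open S" "x \<in> S" "\<And>w. w \<in> S \<Longrightarrow> K w = K' w"
  shows "cpartial j K x = cpartial j K' x"
proof -
  obtain e where e: "e > 0" "ball x e \<subseteq> S" using assms(1,2) open_contains_ball by blast
  have "eventually (\<lambda>w. K (x + w *s axis j 1) = K' (x + w *s axis j 1)) (nhds (0::complex))"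
    unfolding eventually_nhds_metric
  proof (intro exI[of _ e] conjI e allI impI)
    fix w :: complex assume "dist w 0 < e"
    then have "x + w *s axis j 1 \<in> ball x e" by (simp add: dist_norm norm_smult_vec)
    then show "K (x + w *s axis j 1) = K' (x + w *s axis j 1)" using e assms(3) by blast
  qed
  then show ?thesis unfolding cpartial_eq_cdir_deriv cdir_deriv_def by (rule deriv_cong_ev) simp
qed

subsection \<open>Cauchy estimates\<close>

lemma cauchy_deriv_bounds_half_disc:
  fixes \<phi> :: "complex \<Rightarrow> complex"
  assumes hol: "\<phi> holomorphic_on ball 0 r" and bd: "\<And>t. t \<in> ball 0 r \<Longrightarrow> norm (\<phi> t) \<le> M"
    and r: "r > 0" and s: "norm s \<le> r/2"
  shows "norm (deriv \<phi> s) \<le> 4*M/r"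
    and "norm (deriv (deriv \<phi>) s) \<le> 32*M/r^2"
proof -
  have sub: "cball s (r/4) \<subseteq> ball 0 r"
  proof
    fix x assume "x \<in> cball s (r/4)"
    then have "norm (x - s) \<le> r/4" by (simp add: dist_norm norm_minus_commute)
    moreover have "norm x \<le> norm s + norm (x - s)" by (metis add.commute diff_add_cancel norm_triangle_ineq)
    ultimately show "x \<in> ball 0 r" using s r by simp
  qed
  have cauchy: "norm ((deriv ^^ n) \<phi> s) \<le> fact n * M / (r/4)^n" for n
  proof (rule Cauchy_inequality)
    show "\<phi> holomorphic_on ball s (r/4)"
      using hol sub by (meson ball_subset_cball holomorphic_on_subset order_trans)
    show "continuous_on (cball s (r/4)) \<phi>"
      using continuous_on_subset[OF holomorphic_on_imp_continuous_on[OF hol] sub] .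
    show "0 < r/4" using r by simp
    fix x assume "cmod (s - x) = r/4"
    then have "x \<in> ball 0 r" using sub by (auto simp: dist_norm)
    then show "norm (\<phi> x) \<le> M" by (rule bd)
  qed
  show "norm (deriv \<phi> s) \<le> 4*M/r"
    using cauchy[of 1] by (simp add: mult.commute)
  have "fact 2 * M / (r/4)^2 = 32*M/r^2" using r by (simp add: field_simps power2_eq_square)
  moreover have "(deriv ^^ 2) \<phi> = deriv (deriv \<phi>)" by (simp add: numeral_2_eq_2)
  ultimately show "norm (deriv (deriv \<phi>) s) \<le> 32*M/r^2" using cauchy[of 2] by simp
qed

lemma holomorphic_increment_bounds_half_disc:
  fixes \<phi> :: "complex \<Rightarrow> complex"
  assumes hol: "\<phi> holomorphic_on ball 0 r" and bd: "\<And>t. t \<in> ball 0 r \<Longrightarrow> norm (\<phi> t) \<le> M"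
    and r: "r > 0" and t: "norm t \<le> r/2"
  shows "norm (\<phi> t - \<phi> 0) \<le> 4*M*norm t/r"
    and "norm (\<phi> t - \<phi> 0 - deriv \<phi> 0 * t) \<le> 32*M*(norm t)^2/r^2"
proof -
  note est = cauchy_deriv_bounds_half_disc[OF hol bd r]
  have M0: "M \<ge> 0" using bd[of 0] r by (smt (verit) centre_in_ball norm_ge_zero)
  have inball: "s \<in> ball 0 r" if "s \<in> cball 0 (r/2)" for s using that r by auto
  have D1: "(\<phi> has_field_derivative deriv \<phi> s) (at s within cball 0 (r/2))" if "s \<in> cball 0 (r/2)" for s
    using hol inball[OF that]
    by (meson DERIV_deriv_iff_field_differentiable has_field_derivative_at_within
        holomorphic_on_imp_differentiable_at open_ball)
  have D2: "(deriv \<phi> has_field_derivative deriv (deriv \<phi>) s) (at s within cball 0 (r/2))"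
    if "s \<in> cball 0 (r/2)" for s
    using holomorphic_deriv[OF hol open_ball] inball[OF that]
    by (meson DERIV_deriv_iff_field_differentiable has_field_derivative_at_within
        holomorphic_on_imp_differentiable_at open_ball)
  show "norm (\<phi> t - \<phi> 0) \<le> 4*M*norm t/r"
    using field_differentiable_bound[OF convex_cball D1, of "4*M/r" t 0] est(1) t r by auto
  have D3: "((\<lambda>s. \<phi> s - deriv \<phi> 0 * s) has_field_derivative (deriv \<phi> s - deriv \<phi> 0))
      (at s within cball 0 (norm t))" if "s \<in> cball 0 (norm t)" for s
  proof -
    have "(\<phi> has_field_derivative deriv \<phi> s) (at s within cball 0 (norm t))"
      using D1[of s] that t by (meson has_field_derivative_subset mem_cball_0 order_trans subset_cball)
    then show ?thesis by (auto intro!: derivative_eq_intros)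
  qed
  have "norm ((\<phi> t - deriv \<phi> 0 * t) - (\<phi> 0 - deriv \<phi> 0 * 0)) \<le> (32*M/r^2 * norm t) * norm (t - 0)"
  proof (rule field_differentiable_bound[OF convex_cball D3])
    fix s :: complex assume s: "s \<in> cball 0 (norm t)"
    then have "s \<in> cball 0 (r/2)" using t by auto
    then have "norm (deriv \<phi> s - deriv \<phi> 0) \<le> 32*M/r^2 * norm s"
      using field_differentiable_bound[OF convex_cball D2, of "32*M/r^2" s 0] est(2) r by auto
    also have "\<dots> \<le> 32*M/r^2 * norm t" using M0 r s by (intro mult_left_mono) auto
    finally show "norm (deriv \<phi> s - deriv \<phi> 0) \<le> 32*M/r^2 * norm t" .
  qed auto
  then show "norm (\<phi> t - \<phi> 0 - deriv \<phi> 0 * t) \<le> 32*M*(norm t)^2/r^2"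
    by (simp add: power2_eq_square algebra_simps)
qed

text \<open>Restricting to the complex line through \<open>y\<close> in direction \<open>h\<close>, rescaled so that
  \<open>y + h\<close> corresponds to \<open>t = 1\<close>, reduces these to the one-variable estimates.\<close>

lemma holo_on_ball_estimates:
  fixes F :: "complex^'n \<Rightarrow> complex"
  assumes hol: "holo_on (ball y r) F" and bd: "\<And>w. w \<in> ball y r \<Longrightarrow> norm (F w) \<le> M" and r: "r > 0"
  shows "norm (cdir_deriv F y h) \<le> 4*M*norm h/r"
    and "norm h \<le> r/2 \<Longrightarrow> norm (F (y+h) - F y) \<le> 4*M*norm h/r"
    and "norm h \<le> r/2 \<Longrightarrow> norm (F (y+h) - F y - cdir_deriv F y h) \<le> 32*M*(norm h)^2/r^2"
proof -
  have "norm (cdir_deriv F y h) \<le> 4*M*norm h/r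
      \<and> (norm h \<le> r/2 \<longrightarrow> norm (F (y+h) - F y) \<le> 4*M*norm h/r)
      \<and> (norm h \<le> r/2 \<longrightarrow> norm (F (y+h) - F y - cdir_deriv F y h) \<le> 32*M*(norm h)^2/r^2)"
  proof (cases "h = 0")
    case True
    then show ?thesis by (simp add: cdir_deriv_def)
  next
    case False
    define \<rho> where "\<rho> = r / norm h"
    have \<rho>: "\<rho> > 0" using False r by (simp add: \<rho>_def)
    define \<phi> where "\<phi> = (\<lambda>t. F (y + t *s h))"
    have sub: "ball 0 \<rho> \<subseteq> {t. y + t *s h \<in> ball y r}"
    proof
      fix t :: complex assume "t \<in> ball 0 \<rho>"
      then have "norm t * norm h < r" using False by (simp add: \<rho>_def field_simps)
      then show "t \<in> {t. y + t *s h \<in> ball y r}" by (simp add: dist_norm norm_smult_vec)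
    qed
    have hol1: "\<phi> holomorphic_on ball 0 \<rho>"
      unfolding \<phi>_def using holomorphic_on_subset[OF holomorphic_on_line[OF hol] sub] .
    have bd1: "\<And>t. t \<in> ball 0 \<rho> \<Longrightarrow> norm (\<phi> t) \<le> M" using sub bd by (auto simp: \<phi>_def)
    have dv: "cdir_deriv F y h = deriv \<phi> 0" and \<phi>01: "\<phi> 1 = F (y+h)" "\<phi> 0 = F y"
      by (simp_all add: cdir_deriv_def \<phi>_def)
    have "norm (cdir_deriv F y h) \<le> 4*M*norm h/r"
      using cauchy_deriv_bounds_half_disc(1)[OF hol1 bd1 \<rho>, of 0] \<rho> False
      unfolding dv by (simp add: \<rho>_def field_simps)
    moreover have "norm (1::complex) \<le> \<rho>/2" if "norm h \<le> r/2"
      using that False by (simp add: \<rho>_def field_simps)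
    note inc = holomorphic_increment_bounds_half_disc[OF hol1 bd1 \<rho> this]
    ultimately show ?thesis
      using inc False unfolding \<phi>01 dv by (simp add: \<rho>_def field_simps)
  qed
  then show "norm (cdir_deriv F y h) \<le> 4*M*norm h/r"
    and "norm h \<le> r/2 \<Longrightarrow> norm (F (y+h) - F y) \<le> 4*M*norm h/r"
    and "norm h \<le> r/2 \<Longrightarrow> norm (F (y+h) - F y - cdir_deriv F y h) \<le> 32*M*(norm h)^2/r^2"
    by blast+
qed

lemma norm_difference_quotient_le:
  fixes F :: "complex^'n \<Rightarrow> complex"
  assumes "holo_on (ball w (2*r)) F" "\<And>x. x \<in> ball w (2*r) \<Longrightarrow> norm (F x) \<le> M"
    and "0 < r" "e \<noteq> 0" "norm e \<le> r"
  shows "norm ((F (w + e *s axis j 1) - F w) / e) \<le> 2*M/r"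
proof -
  have "norm (F (w + e *s axis j 1) - F w) \<le> 4*M*norm (e *s axis j 1 :: complex^'n)/(2*r)"
    using assms by (intro holo_on_ball_estimates(2)) (auto simp: norm_smult_vec)
  then show ?thesis using assms(3,4) by (simp add: norm_divide norm_smult_vec field_simps)
qed

lemma has_derivative_if_quadratic_remainder:
  fixes G :: "'a::real_normed_vector \<Rightarrow> 'b::real_normed_vector"
  assumes bl: "bounded_linear L" and d: "\<delta> > 0"
    and q: "\<And>h. norm h \<le> \<delta> \<Longrightarrow> norm (G (y+h) - G y - L h) \<le> K * (norm h)^2"
  shows "(G has_derivative L) (at y)"
  unfolding has_derivative_at_alt
proof (intro conjI bl allI impI)
  fix e :: real assume e: "e > 0"
  define d where "d = min \<delta> (e / (\<bar>K\<bar>+1))"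
  have dpos: "d > 0" using d e by (simp add: d_def)
  show "\<exists>d>0. \<forall>z. norm (z - y) < d \<longrightarrow> norm (G z - G y - L (z - y)) \<le> e * norm (z - y)"
  proof (intro exI[of _ d] conjI dpos allI impI)
    fix z assume z: "norm (z - y) < d"
    define h where "h = z - y"
    have h1: "norm h \<le> \<delta>" using z by (simp add: h_def d_def)
    have h2: "norm h * (\<bar>K\<bar>+1) \<le> e" using z e by (simp add: h_def d_def field_simps)
    have "norm (G (y+h) - G y - L h) \<le> K * (norm h)^2" by (rule q[OF h1])
    also have "\<dots> \<le> (norm h * (\<bar>K\<bar>+1)) * norm h"
      using mult_right_mono[of K "\<bar>K\<bar>+1" "norm h * norm h"] by (simp add: power2_eq_square algebra_simps)
    also have "\<dots> \<le> e * norm h" using h2 by (rule mult_right_mono) simp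
    finally show "norm (G z - G y - L (z - y)) \<le> e * norm (z - y)" by (simp add: h_def)
  qed
qed

lemma difference_quotients_tendsto_cpartial:
  fixes F :: "complex^'n \<Rightarrow> complex"
  assumes "holo_on S F" "w \<in> S" "filterlim e (at 0) sequentially"
  shows "((\<lambda>n. (F (w + e n *s axis j 1) - F w) / e n) \<longlongrightarrow> cpartial j F w) sequentially"
proof -
  obtain L where L: "(F has_derivative L) (at w)" "\<forall>a v. L (a *s v) = a * L v"
    using assms(1,2) unfolding holo_on_def by blast
  have d: "((\<lambda>t. F (w + t *s axis j 1)) has_field_derivative L (axis j 1)) (at 0)"
    using L by (intro has_field_derivative_along_line) auto
  have "cpartial j F w = L (axis j 1)"
    unfolding cpartial_eq_cdir_deriv cdir_deriv_def by (rule DERIV_imp_deriv[OF d])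
  moreover have "((\<lambda>t. (F (w + t *s axis j 1) - F (w + 0 *s axis j 1)) / (t - 0)) \<longlongrightarrow> L (axis j 1)) (at 0)"
    using d unfolding has_field_derivative_iff by simp
  from filterlim_compose[OF this assms(3)] show ?thesis
    unfolding calculation by simp
qed

subsection \<open>Minimum modulus and isolated values\<close>

text \<open>A minimum modulus argument: if \<open>1/\<phi>\<close> were holomorphic on the disc, the maximum modulus
  principle would bound \<open>1/\<bar>\<phi> 0\<bar>\<close> by \<open>1/\<epsilon>\<close>.\<close>

lemma holomorphic_has_zero_if_small_centre:
  fixes \<phi> :: "complex \<Rightarrow> complex"
  assumes hol: "\<phi> holomorphic_on cball 0 \<rho>" and \<rho>: "0 < \<rho>"
    and small: "norm (\<phi> 0) < \<epsilon>" and big: "\<And>t. norm t = \<rho> \<Longrightarrow> \<epsilon> \<le> norm (\<phi> t)"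
  shows "\<exists>t. norm t \<le> \<rho> \<and> \<phi> t = 0"
proof (rule ccontr)
  assume "\<not> ?thesis"
  then have nz: "\<And>t. t \<in> cball 0 \<rho> \<Longrightarrow> \<phi> t \<noteq> 0" by auto
  have \<epsilon>: "0 < \<epsilon>" using small norm_ge_zero[of "\<phi> 0"] by linarith
  have "norm (inverse (\<phi> 0)) \<le> inverse \<epsilon>"
  proof (rule maximum_modulus_frontier[where f="\<lambda>t. inverse (\<phi> t)" and \<xi>=0 and S="cball 0 \<rho>"])
    show "(\<lambda>t. inverse (\<phi> t)) holomorphic_on interior (cball 0 \<rho>)"
      using holomorphic_on_subset[OF hol ball_subset_cball] nz by (auto intro!: holomorphic_on_inverse)
    show "continuous_on (closure (cball 0 \<rho>)) (\<lambda>t. inverse (\<phi> t))"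
      using holomorphic_on_imp_continuous_on[OF hol] nz by (auto intro!: continuous_on_inverse)
    show "bounded (cball (0::complex) \<rho>)" "0 \<in> cball (0::complex) \<rho>" using \<rho> by simp_all
    fix z :: complex assume "z \<in> frontier (cball 0 \<rho>)"
    then have "\<epsilon> \<le> norm (\<phi> z)" using \<rho> big by simp
    then show "norm (inverse (\<phi> z)) \<le> inverse \<epsilon>"
      using \<epsilon> by (simp add: norm_inverse le_imp_inverse_le)
  qed
  moreover have "0 < norm (\<phi> 0)" using nz \<rho> by simp
  ultimately have "\<epsilon> \<le> norm (\<phi> 0)" by (simp add: norm_inverse inverse_le_imp_le)
  then show False using small by simp
qed

lemma compact_norm_lower_bound:
  fixes \<phi> :: "'a::topological_space \<Rightarrow> 'b::real_normed_vector"
  assumes "compact K" "continuous_on K \<phi>" "\<And>t. t \<in> K \<Longrightarrow> \<phi> t \<noteq> 0"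
  shows "\<exists>\<delta>>0. \<forall>t\<in>K. \<delta> \<le> norm (\<phi> t)"
proof (cases "K = {}")
  case False
  obtain t0 where "t0 \<in> K" "\<And>t. t \<in> K \<Longrightarrow> norm (\<phi> t0) \<le> norm (\<phi> t)"
    using continuous_attains_inf[OF assms(1) False continuous_on_norm[OF assms(2)]] by blast
  then show ?thesis using assms(3) by (intro exI[of _ "norm (\<phi> t0)"]) auto
qed (auto intro: exI[of _ 1])

text \<open>By the identity theorem on the complex line through \<open>x0\<close> and a point where \<open>g\<close> takes a
  different value, \<open>g x0\<close> is an isolated value of \<open>g\<close> along that line.\<close>

lemma holo_on_isolated_value_on_line:
  fixes g :: "complex^'n \<Rightarrow> complex"
  assumes hol: "holo_on (ball x0 R) g" and x1: "x1 \<in> ball x0 R" and ne: "g x1 \<noteq> g x0"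
  obtains v r where "0 < r" "r * norm v < R" "\<And>t. norm t \<le> r \<Longrightarrow> t \<noteq> 0 \<Longrightarrow> g (x0 + t *s v) \<noteq> g x0"
proof -
  define v where "v = x1 - x0"
  have nv: "0 < norm v" "norm v < R" using ne x1 by (auto simp: v_def dist_norm norm_minus_commute)
  define \<psi> where "\<psi> t = g (x0 + t *s v) - g x0" for t
  have sub: "ball 0 (R / norm v) \<subseteq> {t. x0 + t *s v \<in> ball x0 R}"
  proof
    fix t :: complex assume "t \<in> ball 0 (R / norm v)"
    then have "norm t * norm v < R" using nv by (simp add: field_simps)
    then show "t \<in> {t. x0 + t *s v \<in> ball x0 R}" by (simp add: dist_norm norm_smult_vec)
  qed
  have hol_\<psi>: "\<psi> holomorphic_on ball 0 (R / norm v)"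
    unfolding \<psi>_def by (intro holomorphic_intros holomorphic_on_subset[OF holomorphic_on_line[OF hol] sub])
  have in_ball: "(0::complex) \<in> ball 0 (R / norm v)" "(1::complex) \<in> ball 0 (R / norm v)"
    using nv by (auto simp: field_simps intro: order.strict_trans1[OF norm_ge_zero])
  have \<psi>: "\<psi> 0 = 0" "\<psi> 1 \<noteq> 0" using ne by (simp_all add: \<psi>_def v_def)
  obtain r where r: "0 < r" "\<And>t. t \<in> ball 0 r - {0} \<Longrightarrow> \<psi> t \<noteq> 0"
    by (rule isolated_zeros[OF hol_\<psi> open_ball convex_connected[OF convex_ball]
          in_ball(1) \<psi>(1) in_ball(2) \<psi>(2)]) blast
  show ?thesis
  proof (rule that[of "min (r/2) (1/2)" v])
    show "0 < min (r/2) (1/2)" using r by simp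
    have "min (r/2) (1/2) * norm v \<le> norm v / 2" using nv by simp
    then show "min (r/2) (1/2) * norm v < R" using nv by linarith
    fix t :: complex assume "norm t \<le> min (r/2) (1/2)" "t \<noteq> 0"
    then have "t \<in> ball 0 r - {0}" using r by simp
    then show "g (x0 + t *s v) \<noteq> g x0" using r(2) by (simp add: \<psi>_def)
  qed
qed

lemma line_in_ball:
  fixes t :: complex and v :: "complex^'n"
  assumes "norm t \<le> \<rho>" "\<rho> * norm v < R" shows "x + t *s v \<in> ball x R"
proof -
  have "norm t * norm v \<le> \<rho> * norm v" using assms(1) by (rule mult_right_mono) simp
  then show ?thesis using assms(2) by (simp add: dist_norm norm_smult_vec)
qed

subsection \<open>The ultrafilter as a filter\<close>

lemma tendsto_0_if_eventually_le_divide_Suc: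
  fixes x :: "'i \<Rightarrow> 'a::real_normed_vector"
  assumes "\<rho> > 0" "\<And>m. eventually (\<lambda>i. norm (x i) \<le> \<rho>/(real m+1)) F"
  shows "(x \<longlongrightarrow> 0) F"
  unfolding tendsto_iff
proof (intro allI impI)
  fix e :: real assume e: "e > 0"
  obtain m where m: "inverse (real (Suc m)) < e/\<rho>" using reals_Archimedean[of "e/\<rho>"] e assms(1) by auto
  show "eventually (\<lambda>i. dist (x i) 0 < e) F"
    using assms(2)[of m]
  proof eventually_elim
    case (elim i)
    have "\<rho>/(real m+1) < e" using m assms(1) by (simp add: inverse_eq_divide field_simps)
    with elim show ?case by simp
  qed
qed

locale nonprincipal_uf =
  fixes U :: "nat set set"
  assumes U: "nonprincipal_ultrafilter U"
begin

lemma U_mono: "A \<in> U \<Longrightarrow> A \<subseteq> B \<Longrightarrow> B \<in> U"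
  and U_Int: "A \<in> U \<Longrightarrow> B \<in> U \<Longrightarrow> A \<inter> B \<in> U"
  and U_empty: "{} \<notin> U"
  and U_Compl: "A \<notin> U \<Longrightarrow> -A \<in> U"
  and U_finite: "finite A \<Longrightarrow> A \<notin> U"
  using U unfolding nonprincipal_ultrafilter_def by blast+

definition ufilter :: "nat filter" where "ufilter = Abs_filter (\<lambda>P. {i. P i} \<in> U)"

lemma eventually_ufilter: "eventually P ufilter \<longleftrightarrow> {i. P i} \<in> U"
  unfolding ufilter_def
proof (rule eventually_Abs_filter, unfold is_filter_def, intro conjI allI impI)
  show "{i. True} \<in> U" using U_Compl[of "{}"] U_empty by auto
next
  fix P Q assume "{i. P i} \<in> U" "{i. Q i} \<in> U"
  from U_Int[OF this] show "{i. P i \<and> Q i} \<in> U" by (simp add: Collect_conj_eq)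
next
  fix P Q assume "\<forall>x. P x \<longrightarrow> Q x" "{i. P i} \<in> U"
  then show "{i. Q i} \<in> U" by (metis U_mono mem_Collect_eq subsetI)
qed

lemma ufilter_ne_bot: "ufilter \<noteq> bot"
  using U_empty by (simp add: trivial_limit_def eventually_ufilter)

lemma eventually_ufilter_not: "\<not> eventually P ufilter \<Longrightarrow> eventually (\<lambda>i. \<not> P i) ufilter"
  using U_Compl[of "{i. P i}"] by (simp add: eventually_ufilter Collect_neg_eq)

lemma ufilter_le_sequentially: "ufilter \<le> sequentially"
  unfolding le_filter_def
proof (intro allI impI)
  fix P assume "eventually P sequentially"
  then obtain N where N: "\<And>n. n \<ge> N \<Longrightarrow> P n" by (auto simp: eventually_sequentially)
  have "- {..<N} \<in> U" using U_Compl U_finite by blast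
  then show "eventually P ufilter" unfolding eventually_ufilter by (rule U_mono) (auto intro: N)
qed

lemma happrox_iff_tendsto: "happrox U x y \<longleftrightarrow> ((\<lambda>i. x i - y i) \<longlongrightarrow> 0) ufilter"
  unfolding happrox_def hinfinitesimal_def tendsto_iff by (simp add: eventually_ufilter)

lemma happrox_hstar_iff_tendsto: "happrox U s (hstar c) \<longleftrightarrow> (s \<longlongrightarrow> c) ufilter"
  unfolding happrox_def hinfinitesimal_def tendsto_iff by (simp add: eventually_ufilter hstar_def dist_norm)

lemma hbounded_iff_eventually: "hbounded U s \<longleftrightarrow> (\<exists>r. eventually (\<lambda>i. norm (s i) \<le> r) ufilter)"
  unfolding hbounded_def by (simp add: eventually_ufilter)

lemma tendsto_imp_hbounded:
  assumes "(s \<longlongrightarrow> c) ufilter" shows "hbounded U s"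
proof -
  have "eventually (\<lambda>i. dist (s i) c < 1) ufilter" using assms by (simp add: tendsto_iff)
  then have "eventually (\<lambda>i. norm (s i) \<le> norm c + 1) ufilter"
    by eventually_elim (metis dist_norm norm_triangle_sub add_le_cancel_left less_imp_le order_trans)
  then show ?thesis unfolding hbounded_iff_eventually by blast
qed

lemma hbounded_imp_convergent:
  fixes s :: "nat \<Rightarrow> 'a::{heine_borel,real_normed_vector}"
  assumes "hbounded U s" shows "\<exists>c. (s \<longlongrightarrow> c) ufilter"
proof -
  obtain r where "eventually (\<lambda>i. norm (s i) \<le> r) ufilter" using assms hbounded_iff_eventually by blast
  then have ev: "eventually (\<lambda>x. x \<in> cball 0 r) (filtermap s ufilter)"
    by (simp add: eventually_filtermap)
  have ne: "filtermap s ufilter \<noteq> bot" using ufilter_ne_bot by (simp add: filtermap_bot_iff)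
  obtain c where c: "inf (nhds c) (filtermap s ufilter) \<noteq> bot"
    using compact_cball[of "0::'a" r] ne ev unfolding compact_filter by blast
  have "eventually (\<lambda>i. s i \<in> S) ufilter" if S: "open S" "c \<in> S" for S
  proof (rule ccontr)
    assume "\<not> eventually (\<lambda>i. s i \<in> S) ufilter"
    then have "eventually (\<lambda>x. x \<notin> S) (filtermap s ufilter)"
      by (simp add: eventually_filtermap eventually_ufilter_not)
    moreover have "eventually (\<lambda>x. x \<in> S) (nhds c)" using S eventually_nhds by blast
    ultimately have "eventually (\<lambda>x. False) (inf (nhds c) (filtermap s ufilter))"
      unfolding eventually_inf by blast
    then show False using c by (simp add: trivial_limit_def)
  qed
  then show ?thesis unfolding tendsto_def by blast
qed

lemma hst_eq_if_tendsto: "(s \<longlongrightarrow> c) ufilter \<Longrightarrow> hst U s = c"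
  unfolding hst_def happrox_hstar_iff_tendsto
  using tendsto_unique[OF ufilter_ne_bot] by blast

lemma tendsto_hst:
  fixes s :: "nat \<Rightarrow> 'a::{heine_borel,real_normed_vector}"
  shows "hbounded U s \<Longrightarrow> (s \<longlongrightarrow> hst U s) ufilter"
  using hbounded_imp_convergent hst_eq_if_tendsto by metis

lemma Sball_iff_tendsto:
  "q \<in> Sball U p r \<longleftrightarrow> (\<exists>d. d < r \<and> ((\<lambda>i. norm (q i - p i)) \<longlongrightarrow> d) ufilter)"
  unfolding Sball_def
  using tendsto_hst tendsto_imp_hbounded hst_eq_if_tendsto by (metis (lifting) mem_Collect_eq)

lemma centre_in_Sball: "r > 0 \<Longrightarrow> p \<in> Sball U p r"
  unfolding Sball_iff_tendsto by (intro exI[of _ 0]) simp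

lemma Sopen_Sball: "Sopen U (Sball U p r)"
  unfolding Sopen_def
proof
  fix q assume "q \<in> Sball U p r"
  then obtain dq where dq: "dq < r" "((\<lambda>i. norm (q i - p i)) \<longlongrightarrow> dq) ufilter"
    using Sball_iff_tendsto by blast
  show "\<exists>s>0. Sball U q s \<subseteq> Sball U p r"
  proof (intro exI[of _ "r - dq"] conjI subsetI)
    show "r - dq > 0" using dq by simp
    fix z assume "z \<in> Sball U q (r - dq)"
    then obtain e where e: "e < r - dq" "((\<lambda>i. norm (z i - q i)) \<longlongrightarrow> e) ufilter"
      using Sball_iff_tendsto by blast
    have le: "norm (z i - p i) \<le> norm (z i - q i) + norm (q i - p i)" for i
      using norm_triangle_ineq[of "z i - q i" "q i - p i"] by simp
    have sum: "((\<lambda>i. norm (z i - q i) + norm (q i - p i)) \<longlongrightarrow> e + dq) ufilter"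
      by (intro tendsto_add e dq)
    then obtain B where "eventually (\<lambda>i. norm (norm (z i - q i) + norm (q i - p i)) \<le> B) ufilter"
      using tendsto_imp_hbounded unfolding hbounded_iff_eventually by blast
    then have "eventually (\<lambda>i. norm (norm (z i - p i)) \<le> B) ufilter"
    proof eventually_elim
      case (elim i)
      then show ?case using le[of i] by (smt (verit) norm_ge_zero real_norm_def)
    qed
    then have "hbounded U (\<lambda>i. norm (z i - p i))" unfolding hbounded_iff_eventually by blast
    then obtain dz where dz: "((\<lambda>i. norm (z i - p i)) \<longlongrightarrow> dz) ufilter" using hbounded_imp_convergent by blast
    have "dz \<le> e + dq" by (rule tendsto_le[OF ufilter_ne_bot sum dz always_eventually]) (use le in blast)
    then show "z \<in> Sball U p r" unfolding Sball_iff_tendsto using dz e by (intro exI[of _ dz]) auto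
  qed
qed

lemma Sball_mono: "r \<le> s \<Longrightarrow> Sball U p r \<subseteq> Sball U p s"
  unfolding Sball_def by auto

text \<open>\<open>k i\<close> is the largest \<open>n \<le> i\<close> for which index \<open>i\<close> has a witness; as \<open>U\<close> is nonprincipal,
  \<open>k i \<ge> m\<close> on a set in \<open>U\<close> for every \<open>m\<close>.\<close>

lemma ufilter_diagonal:
  fixes P :: "nat \<Rightarrow> nat \<Rightarrow> 'a \<Rightarrow> bool"
  assumes "\<And>n. eventually (\<lambda>i. \<exists>t. P n i t) ufilter"
  obtains k y where "\<And>m. eventually (\<lambda>i. m \<le> k i \<and> P (k i) i (y i)) ufilter"
proof -
  define A where "A n = {i. \<exists>t. P n i t}" for n
  have AU: "A n \<in> U" for n using assms[of n] by (simp add: eventually_ufilter A_def)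
  define k where "k i = Max {m. m \<le> i \<and> i \<in> A m}" for i
  have fin: "finite {m. m \<le> i \<and> i \<in> A m}" for i by (rule finite_subset[of _ "{..i}"]) auto
  define y where "y i = (SOME t. P (k i) i t)" for i
  have "eventually (\<lambda>i. m \<le> k i \<and> P (k i) i (y i)) ufilter" for m
  proof -
    have "eventually (\<lambda>i. i \<in> A m) ufilter" "eventually (\<lambda>i. m \<le> i) ufilter"
      using AU filter_leD[OF ufilter_le_sequentially eventually_ge_at_top]
      by (simp_all add: eventually_ufilter)
    then show ?thesis
    proof eventually_elim
      case (elim i)
      then have "m \<in> {m. m \<le> i \<and> i \<in> A m}" by simp
      with Max_ge[OF fin] Max_in[OF fin] have "m \<le> k i" "i \<in> A (k i)" unfolding k_def by auto
      then show ?case unfolding A_def y_def by (auto intro: someI_ex)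
    qed
  qed
  then show ?thesis using that by blast
qed

lemma eventually_cball_subset_if_Sopen:
  assumes B: "Sopen U B" and aB: "a \<in> B" and BD: "B \<subseteq> internal_set U D"
  obtains r where "r > 0" "eventually (\<lambda>i. cball (a i) r \<subseteq> D i) ufilter"
proof -
  obtain r0 where r0: "r0 > 0" "Sball U a r0 \<subseteq> B" using B aB unfolding Sopen_def by blast
  have ev: "eventually (\<lambda>i. cball (a i) (r0/2) \<subseteq> D i) ufilter"
  proof (rule ccontr)
    assume "\<not> ?thesis"
    from eventually_ufilter_not[OF this]
    have "eventually (\<lambda>i. \<exists>w. w \<in> cball (a i) (r0/2) \<and> w \<notin> D i) ufilter"
      by (rule eventually_mono) blast
    then have ey: "eventually (\<lambda>i. y i \<in> cball (a i) (r0/2) \<and> y i \<notin> D i) ufilter"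
      if "y = (\<lambda>i. SOME w. w \<in> cball (a i) (r0/2) \<and> w \<notin> D i)" for y
      unfolding that by (rule eventually_mono) (rule someI_ex)
    define y where "y = (\<lambda>i. SOME w. w \<in> cball (a i) (r0/2) \<and> w \<notin> D i)"
    have eb: "eventually (\<lambda>i. norm (y i - a i) \<le> r0/2) ufilter"
      using ey[OF y_def] by (rule eventually_mono) (simp add: dist_norm norm_minus_commute)
    then have "eventually (\<lambda>i. norm (norm (y i - a i)) \<le> r0/2) ufilter" by simp
    then have "hbounded U (\<lambda>i. norm (y i - a i))" unfolding hbounded_iff_eventually by blast
    then obtain d where d: "((\<lambda>i. norm (y i - a i)) \<longlongrightarrow> d) ufilter"
      using hbounded_imp_convergent by blast
    have "d \<le> r0/2" by (rule tendsto_upperbound[OF d eb ufilter_ne_bot])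
    then have "y \<in> Sball U a r0" unfolding Sball_iff_tendsto using d r0 by (intro exI[of _ d]) auto
    then have "eventually (\<lambda>i. y i \<in> D i) ufilter"
      using r0 BD by (auto simp: internal_set_def eventually_ufilter)
    with ey[OF y_def] have "eventually (\<lambda>i. False) ufilter" by eventually_elim blast
    then show False using ufilter_ne_bot by (simp add: trivial_limit_def)
  qed
  show ?thesis by (rule that[OF _ ev]) (use r0 in simp)
qed

lemma eventually_bounded_on_cball_if_halo_bounded:
  fixes a :: "nat \<Rightarrow> 'a::real_normed_vector" and f :: "nat \<Rightarrow> 'a \<Rightarrow> 'b::real_normed_vector"
  assumes fb: "\<forall>z\<in>halo U a. hbounded U (happ f z)"
  obtains m :: nat where "eventually (\<lambda>i. \<forall>w\<in>cball (a i) (1/(real m+1)). norm (f i w) \<le> real m) ufilter"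
proof -
  have "\<exists>m::nat. eventually (\<lambda>i. \<forall>w\<in>cball (a i) (1/(real m+1)). norm (f i w) \<le> real m) ufilter"
  proof (rule ccontr)
    assume neg: "\<not> ?thesis"
    have "eventually (\<lambda>i. \<exists>w. w \<in> cball (a i) (1/(real m+1)) \<and> real m < norm (f i w)) ufilter"
      for m
    proof -
      have "\<not> eventually (\<lambda>i. \<forall>w\<in>cball (a i) (1/(real m+1)). norm (f i w) \<le> real m) ufilter"
        using neg by blast
      from eventually_ufilter_not[OF this] show ?thesis by (rule eventually_mono) (auto simp: not_le)
    qed
    then obtain k y where ky: "\<And>m. eventually (\<lambda>i. m \<le> k i
        \<and> y i \<in> cball (a i) (1/(real (k i)+1)) \<and> real (k i) < norm (f i (y i))) ufilter"
      by (rule ufilter_diagonal[where P="\<lambda>n i w. w \<in> cball (a i) (1/(real n+1)) \<and> real n < norm (f i w)"])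
        blast
    have close: "eventually (\<lambda>i. norm (y i - a i) \<le> 1/(real m+1)) ufilter" for m
      using ky[of m]
    proof eventually_elim
      case (elim i)
      then have "norm (y i - a i) \<le> 1/(real (k i)+1)" by (simp add: dist_norm norm_minus_commute)
      also have "\<dots> \<le> 1/(real m+1)" using elim by (intro divide_left_mono) auto
      finally show ?case .
    qed
    have "((\<lambda>i. y i - a i) \<longlongrightarrow> 0) ufilter"
      by (rule tendsto_0_if_eventually_le_divide_Suc[OF zero_less_one close])
    then have "y \<in> halo U a" by (simp add: halo_def happrox_iff_tendsto)
    then obtain Bd where "eventually (\<lambda>i. norm (f i (y i)) \<le> Bd) ufilter"
      using fb unfolding hbounded_iff_eventually happ_def by blast
    with ky[of "nat \<lceil>Bd\<rceil>"] have "eventually (\<lambda>i. False) ufilter"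
    proof eventually_elim
      case (elim i)
      then show ?case using real_nat_ceiling_ge[of Bd] by linarith
    qed
    then show False using ufilter_ne_bot by (simp add: trivial_limit_def)
  qed
  then obtain m :: nat where "eventually (\<lambda>i. \<forall>w\<in>cball (a i) (1/(real m+1)). norm (f i w) \<le> real m) ufilter" ..
  then show ?thesis by (rule that)
qed

lemma exists_radius_holo_bounded:
  fixes a :: "nat \<Rightarrow> complex^'n" and f :: "nat \<Rightarrow> complex^'n \<Rightarrow> complex"
  assumes B_open: "Sopen U B" and aB: "a \<in> B" and B_dom: "B \<subseteq> internal_set U D"
    and f_hol: "internal_holomorphic U D f" and f_bdd: "\<forall>z\<in>halo U a. hbounded U (happ f z)"
  obtains R M where "R > 0" "Sball U a R \<subseteq> B"
    "eventually (\<lambda>i. holo_on (ball (a i) R) (f i) \<and> (\<forall>w\<in>ball (a i) R. norm (f i w) \<le> M)) ufilter"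
proof -
  obtain r0 where r0: "r0 > 0" "Sball U a r0 \<subseteq> B" using B_open aB unfolding Sopen_def by blast
  obtain r1 where r1: "r1 > 0" "eventually (\<lambda>i. cball (a i) r1 \<subseteq> D i) ufilter"
    using eventually_cball_subset_if_Sopen[OF B_open aB B_dom] by blast
  obtain m :: nat where m: "eventually (\<lambda>i. \<forall>w\<in>cball (a i) (1/(real m+1)). norm (f i w) \<le> real m) ufilter"
    using eventually_bounded_on_cball_if_halo_bounded[OF f_bdd] by blast
  define R where "R = min (min r0 r1) (1/(real m+1))"
  have R: "R > 0" "R \<le> r0" "R \<le> r1" "R \<le> 1/(real m+1)" using r0 r1 by (auto simp: R_def)
  have "eventually (\<lambda>i. open (D i) \<and> holo_on (D i) (f i)) ufilter"
    using f_hol by (simp add: internal_holomorphic_def eventually_ufilter)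
  with r1(2) m have "eventually (\<lambda>i. holo_on (ball (a i) R) (f i)
      \<and> (\<forall>w\<in>ball (a i) R. norm (f i w) \<le> real m)) ufilter"
  proof eventually_elim
    case (elim i)
    have "ball (a i) R \<subseteq> D i" "ball (a i) R \<subseteq> cball (a i) (1/(real m+1))"
      using elim(1) R by auto
    then show ?case using elim(2,3) holo_on_subset by blast
  qed
  with R(1) order_trans[OF Sball_mono[OF R(2)] r0(2)] show ?thesis by (rule that)
qed

subsection \<open>Limits of uniformly bounded holomorphic families\<close>

lemma holo_family_cdir_deriv_limit:
  fixes F :: "nat \<Rightarrow> complex^'n \<Rightarrow> complex"
  assumes r: "r > 0"
    and ev: "eventually (\<lambda>i. holo_on (ball y r) (F i) \<and> (\<forall>w\<in>ball y r. norm (F i w) \<le> M)) ufilter"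
  obtains L where "\<And>h. ((\<lambda>i. cdir_deriv (F i) y h) \<longlongrightarrow> L h) ufilter"
    and "bounded_linear L" and "\<And>c v. L (c *s v) = c * L v"
proof -
  have yin: "y \<in> ball y r" using r by simp
  have "\<exists>l. ((\<lambda>i. cdir_deriv (F i) y h) \<longlongrightarrow> l) ufilter" for h
  proof (rule hbounded_imp_convergent, unfold hbounded_iff_eventually, intro exI)
    show "eventually (\<lambda>i. norm (cdir_deriv (F i) y h) \<le> 4*M*norm h/r) ufilter"
      using ev by eventually_elim (intro holo_on_ball_estimates(1)[OF _ _ r], auto)
  qed
  then obtain L where conv: "\<And>h. ((\<lambda>i. cdir_deriv (F i) y h) \<longlongrightarrow> L h) ufilter" by metis
  have evD: "eventually (\<lambda>i. linear (cdir_deriv (F i) y)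
      \<and> (\<forall>c v. cdir_deriv (F i) y (c *s v) = c * cdir_deriv (F i) y v)) ufilter"
    using ev
  proof eventually_elim
    case (elim i)
    then show ?case
      using holo_on_has_derivative_cdir_deriv[OF _ yin, of "F i"] has_derivative_linear by blast
  qed
  have limit_eq: "L u = l" if "eventually (\<lambda>i. D i = cdir_deriv (F i) y u) ufilter" "(D \<longlongrightarrow> l) ufilter"
    for u D l
    using tendsto_unique[OF ufilter_ne_bot conv[of u] Lim_transform_eventually[OF that(2,1)]] .
  have Lsc: "L (c *s v) = c * L v" for c v
    by (rule limit_eq[OF _ tendsto_mult_left[OF conv[of v]]]) (use evD in \<open>auto elim!: eventually_mono\<close>)
  have "L (u + v) = L u + L v" for u v
    by (rule limit_eq[OF _ tendsto_add[OF conv[of u] conv[of v]]])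
      (use evD in \<open>auto elim!: eventually_mono simp: linear_add\<close>)
  then have "linear L"
    by (intro linearI) (simp_all add: scaleR_eq_of_real_smult_vec Lsc scaleR_conv_of_real[where 'a=complex])
  then have "bounded_linear L" by (simp add: linear_conv_bounded_linear)
  with that conv Lsc show ?thesis by blast
qed

text \<open>The limit inherits the uniform quadratic remainder estimate of the members of the family,
  hence is complex differentiable.\<close>

lemma holo_family_limit_has_derivative:
  fixes F :: "nat \<Rightarrow> complex^'n \<Rightarrow> complex" and G :: "complex^'n \<Rightarrow> complex"
  assumes r: "r > 0"
    and ev: "eventually (\<lambda>i. holo_on (ball y r) (F i) \<and> (\<forall>w\<in>ball y r. norm (F i w) \<le> M)) ufilter"
    and lim: "\<And>w. w \<in> ball y r \<Longrightarrow> ((\<lambda>i. F i w) \<longlongrightarrow> G w) ufilter"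
  obtains L where "(G has_derivative L) (at y)" and "\<And>c v. L (c *s v) = c * L v"
    and "\<And>h. ((\<lambda>i. cdir_deriv (F i) y h) \<longlongrightarrow> L h) ufilter"
proof -
  obtain L where conv: "\<And>h. ((\<lambda>i. cdir_deriv (F i) y h) \<longlongrightarrow> L h) ufilter"
    and bl: "bounded_linear L" and Lsc: "\<And>c v. L (c *s v) = c * L v"
    using holo_family_cdir_deriv_limit[OF r ev] by blast
  have "norm (G (y+h) - G y - L h) \<le> 32*M/r^2 * (norm h)^2" if h: "norm h \<le> r/2" for h
  proof (rule tendsto_upperbound[OF _ _ ufilter_ne_bot])
    have "y + h \<in> ball y r" "y \<in> ball y r" using h r by (simp_all add: dist_norm)
    then show "((\<lambda>i. norm (F i (y+h) - F i y - cdir_deriv (F i) y h))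
        \<longlongrightarrow> norm (G (y+h) - G y - L h)) ufilter"
      by (intro tendsto_norm tendsto_diff lim conv)
    show "eventually (\<lambda>i. norm (F i (y+h) - F i y - cdir_deriv (F i) y h) \<le> 32*M/r^2 * (norm h)^2) ufilter"
      using ev by eventually_elim (use holo_on_ball_estimates(3)[OF _ _ r h] in auto)
  qed
  then have "(G has_derivative L) (at y)"
    using r by (intro has_derivative_if_quadratic_remainder[OF bl, where \<delta>="r/2" and K="32*M/r^2"]) auto
  then show ?thesis using that Lsc conv by blast
qed

text \<open>The difference quotients in direction \<open>j\<close> form a uniformly bounded holomorphic family
  converging to \<open>cpartial j F\<close>.\<close>

lemma holo_on_cpartial:
  fixes F :: "complex^'n \<Rightarrow> complex"
  assumes hol: "holo_on S F" and S: "open S"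
  shows "holo_on S (cpartial j F)"
  unfolding holo_on_def
proof
  fix y assume "y \<in> S"
  then obtain r0 where r0: "r0 > 0" "cball y r0 \<subseteq> S" using S open_contains_cball by blast
  define r where "r = r0/3"
  have r: "r > 0" "cball y (3*r) \<subseteq> S" using r0 by (simp_all add: r_def)
  obtain M where M: "\<And>w. w \<in> cball y (3*r) \<Longrightarrow> norm (F w) \<le> M"
    using compact_imp_bounded[OF compact_continuous_image[OF
        continuous_on_subset[OF holo_on_imp_continuous_on[OF hol] r(2)] compact_cball]]
    unfolding bounded_iff by blast
  define e where "e n = complex_of_real (r / (real n + 1))" for n
  have "norm (e n) = r / (real n + 1)" "r / (real n + 1) \<le> r" "0 < r / (real n + 1)" for n
    using r(1) by (simp_all only: e_def norm_of_real) (auto simp: field_simps)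
  then have e: "e n \<noteq> 0" "norm (e n) \<le> r" "norm (e n *s axis j 1 :: complex^'n) \<le> r" for n
    by (metis norm_zero order_less_irrefl, simp, simp add: norm_smult_vec)
  define Fn where "Fn n w = (F (w + e n *s axis j 1) - F w) / e n" for n w
  have ev: "eventually (\<lambda>n. holo_on (ball y r) (Fn n) \<and> (\<forall>w\<in>ball y r. norm (Fn n w) \<le> 2*M/r)) ufilter"
  proof (intro always_eventually allI conjI ballI)
    fix n
    have "w + e n *s axis j 1 \<in> cball y (3*r)" if "w \<in> ball y r" for w
      using that e(3)[of n] r(1) norm_triangle_ineq[of "w - y" "e n *s axis j 1"]
      by (simp add: dist_norm norm_minus_commute algebra_simps)
    then show "holo_on (ball y r) (Fn n)"
      unfolding Fn_def using r by (intro holo_on_difference_quotient[OF hol]) auto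
    fix w assume w: "w \<in> ball y r"
    have sub: "ball w (2*r) \<subseteq> cball y (3*r)"
    proof
      fix x assume "x \<in> ball w (2*r)"
      then show "x \<in> cball y (3*r)" using w dist_triangle[of y x w] by simp
    qed
    show "norm (Fn n w) \<le> 2*M/r"
      unfolding Fn_def using hol sub r M e(1,2) holo_on_subset
      by (intro norm_difference_quotient_le) blast+
  qed
  have "(\<lambda>n. r * inverse (real (Suc n))) \<longlonglongrightarrow> r * 0"
    by (intro tendsto_mult_left LIMSEQ_inverse_real_of_nat)
  from tendsto_of_real[OF this, where 'a=complex]
  have "(\<lambda>n. complex_of_real (r * inverse (real (Suc n)))) \<longlonglongrightarrow> 0" by simp
  moreover have "(\<lambda>n. complex_of_real (r * inverse (real (Suc n)))) = e"
    by (auto simp: e_def divide_inverse add.commute)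
  ultimately have "e \<longlonglongrightarrow> 0" by simp
  then have "filterlim e (at 0) sequentially"
    using e(1) by (simp add: filterlim_at)
  then have "((\<lambda>n. Fn n w) \<longlongrightarrow> cpartial j F w) ufilter" if "w \<in> ball y r" for w
    using that r unfolding Fn_def
    by (intro tendsto_mono[OF ufilter_le_sequentially] difference_quotients_tendsto_cpartial[OF hol]) auto
  from holo_family_limit_has_derivative[OF r(1) ev this]
  show "\<exists>L. (cpartial j F has_derivative L) (at y) \<and> (\<forall>c v. L (c *s v) = c * L v)" by metis
qed

end

subsection \<open>Standard parts of internal holomorphic functions near a bounded point\<close>

locale halo_ball = nonprincipal_uf +
  fixes a :: "nat \<Rightarrow> complex^'n" and R :: real
  assumes a_hbounded: "hbounded U a" and R_pos: "R > 0"
begin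

definition a0 :: "complex^'n" where "a0 = hst U a"

lemma tendsto_a0: "(a \<longlongrightarrow> a0) ufilter"
  unfolding a0_def by (rule tendsto_hst[OF a_hbounded])

definition bounded_holo_family :: "(nat \<Rightarrow> complex^'n \<Rightarrow> complex) \<Rightarrow> bool" where
  "bounded_holo_family F \<longleftrightarrow> (\<forall>r. 0 < r \<and> r < R \<longrightarrow> (\<exists>M. eventually (\<lambda>i. holo_on (ball (a i) R) (F i)
       \<and> (\<forall>w\<in>cball (a i) r. norm (F i w) \<le> M)) ufilter))"

definition st_fun :: "(nat \<Rightarrow> complex^'n \<Rightarrow> complex) \<Rightarrow> complex^'n \<Rightarrow> complex" where
  "st_fun F x = hst U (\<lambda>i. F i x)"

lemma bounded_holo_familyI:
  assumes "eventually (\<lambda>i. holo_on (ball (a i) R) (F i) \<and> (\<forall>w\<in>ball (a i) R. norm (F i w) \<le> M)) ufilter"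
  shows "bounded_holo_family F"
  unfolding bounded_holo_family_def
proof (intro allI impI exI)
  fix r assume r: "0 < r \<and> r < R"
  from assms show "eventually (\<lambda>i. holo_on (ball (a i) R) (F i)
      \<and> (\<forall>w\<in>cball (a i) r. norm (F i w) \<le> M)) ufilter"
    by eventually_elim (use r in auto)
qed

lemma bounded_holo_family_cpartial:
  assumes "bounded_holo_family F" shows "bounded_holo_family (\<lambda>i. cpartial j (F i))"
  unfolding bounded_holo_family_def
proof (intro allI impI)
  fix r assume r: "0 < r \<and> r < R"
  define \<delta> where "\<delta> = (R - r)/2"
  have \<delta>: "\<delta> > 0" "r + \<delta> < R" using r by (auto simp: \<delta>_def field_simps)
  then have "0 < r + \<delta> \<and> r + \<delta> < R" using r by simp
  obtain M where M: "eventually (\<lambda>i. holo_on (ball (a i) R) (F i)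
      \<and> (\<forall>w\<in>cball (a i) (r + \<delta>). norm (F i w) \<le> M)) ufilter"
    using assms unfolding bounded_holo_family_def by (meson \<open>0 < r + \<delta> \<and> r + \<delta> < R\<close>)
  have "eventually (\<lambda>i. holo_on (ball (a i) R) (cpartial j (F i))
      \<and> (\<forall>w\<in>cball (a i) r. norm (cpartial j (F i) w) \<le> 4*M/\<delta>)) ufilter"
    using M
  proof eventually_elim
    case (elim i)
    have "norm (cdir_deriv (F i) w (axis j 1)) \<le> 4*M*norm (axis j 1 :: complex^'n)/\<delta>"
      if w: "w \<in> cball (a i) r" for w
    proof (rule holo_on_ball_estimates(1)[OF _ _ \<delta>(1)])
      have sub: "ball w \<delta> \<subseteq> cball (a i) (r + \<delta>)" "cball (a i) (r + \<delta>) \<subseteq> ball (a i) R"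
      proof
        fix x assume "x \<in> ball w \<delta>"
        then show "x \<in> cball (a i) (r + \<delta>)" using w dist_triangle[of "a i" x w] by simp
      qed (use \<delta> in auto)
      then show "holo_on (ball w \<delta>) (F i)" using elim holo_on_subset by blast
      show "\<And>x. x \<in> ball w \<delta> \<Longrightarrow> norm (F i x) \<le> M" using elim sub by blast
    qed
    moreover have "holo_on (ball (a i) R) (cpartial j (F i))" using elim by (simp add: holo_on_cpartial)
    ultimately show ?case by (simp add: cpartial_eq_cdir_deriv)
  qed
  then show "\<exists>M. eventually (\<lambda>i. holo_on (ball (a i) R) (cpartial j (F i))
      \<and> (\<forall>w\<in>cball (a i) r. norm (cpartial j (F i) w) \<le> M)) ufilter" ..
qed

lemma bounded_holo_family_near:
  assumes "bounded_holo_family F" "x \<in> ball a0 R"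
  obtains \<rho> M where "\<rho> > 0" "ball x \<rho> \<subseteq> ball a0 R"
    "eventually (\<lambda>i. holo_on (ball x \<rho>) (F i) \<and> (\<forall>w\<in>ball x \<rho>. norm (F i w) \<le> M)) ufilter"
proof -
  define \<rho> where "\<rho> = (R - dist a0 x)/4"
  have \<rho>: "\<rho> > 0" using assms(2) by (simp add: \<rho>_def)
  have d: "0 \<le> dist a0 x" "dist a0 x < R" using assms(2) by simp_all
  then have "0 < dist a0 x + 2*\<rho> \<and> dist a0 x + 2*\<rho> < R" unfolding \<rho>_def by argo
  obtain M where M: "eventually (\<lambda>i. holo_on (ball (a i) R) (F i)
      \<and> (\<forall>w\<in>cball (a i) (dist a0 x + 2*\<rho>). norm (F i w) \<le> M)) ufilter"
    using assms(1) unfolding bounded_holo_family_def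
    by (meson \<open>0 < dist a0 x + 2*\<rho> \<and> dist a0 x + 2*\<rho> < R\<close>)
  have "eventually (\<lambda>i. dist (a i) a0 < \<rho>) ufilter" using tendsto_a0 \<rho> by (simp add: tendsto_iff)
  with M have "eventually (\<lambda>i. holo_on (ball x \<rho>) (F i) \<and> (\<forall>w\<in>ball x \<rho>. norm (F i w) \<le> M)) ufilter"
  proof eventually_elim
    case (elim i)
    have "ball x \<rho> \<subseteq> cball (a i) (dist a0 x + 2*\<rho>)"
    proof
      fix w assume "w \<in> ball x \<rho>"
      moreover have "dist (a i) w \<le> dist (a i) x + dist x w" "dist (a i) x \<le> dist (a i) a0 + dist a0 x"
        by (rule dist_triangle)+
      ultimately show "w \<in> cball (a i) (dist a0 x + 2*\<rho>)" using elim(2) by simp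
    qed
    moreover have "cball (a i) (dist a0 x + 2*\<rho>) \<subseteq> ball (a i) R"
      using \<open>0 < dist a0 x + 2*\<rho> \<and> dist a0 x + 2*\<rho> < R\<close> by auto
    ultimately show ?case using elim(1) holo_on_subset by blast
  qed
  moreover have "ball x \<rho> \<subseteq> ball a0 R"
  proof
    fix w assume "w \<in> ball x \<rho>"
    then show "w \<in> ball a0 R" using assms(2) dist_triangle[of a0 w x] by (simp add: \<rho>_def)
  qed
  ultimately show ?thesis using that \<rho> by blast
qed

lemma tendsto_st_fun:
  assumes F: "bounded_holo_family F" and x: "x \<in> ball a0 R" and z: "(z \<longlongrightarrow> x) ufilter"
  shows "((\<lambda>i. F i (z i)) \<longlongrightarrow> st_fun F x) ufilter"
proof -
  obtain \<rho> M where \<rho>: "\<rho> > 0"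
    and M: "eventually (\<lambda>i. holo_on (ball x \<rho>) (F i) \<and> (\<forall>w\<in>ball x \<rho>. norm (F i w) \<le> M)) ufilter"
    using bounded_holo_family_near[OF F x] by blast
  have "eventually (\<lambda>i. dist (z i) x < \<rho>/2) ufilter" using z \<rho> unfolding tendsto_iff by (meson half_gt_zero)
  with M have est: "eventually (\<lambda>i. norm (F i x) \<le> M
      \<and> norm (F i (z i) - F i x) \<le> 4*M/\<rho> * dist (z i) x) ufilter"
  proof eventually_elim
    case (elim i)
    then have "norm (F i (x + (z i - x)) - F i x) \<le> 4*M*norm (z i - x)/\<rho>"
      by (intro holo_on_ball_estimates(2)[OF _ _ \<rho>]) (auto simp: dist_norm)
    then show ?case using elim \<rho> by (simp add: dist_norm)
  qed
  then have "eventually (\<lambda>i. norm (F i x) \<le> M) ufilter" by (rule eventually_mono) simp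
  then have "hbounded U (\<lambda>i. F i x)" unfolding hbounded_iff_eventually by blast
  then have lim_x: "((\<lambda>i. F i x) \<longlongrightarrow> st_fun F x) ufilter" unfolding st_fun_def by (rule tendsto_hst)
  have "((\<lambda>i. F i (z i) - F i x) \<longlongrightarrow> 0) ufilter"
  proof (rule Lim_null_comparison)
    show "eventually (\<lambda>i. norm (F i (z i) - F i x) \<le> 4*M/\<rho> * dist (z i) x) ufilter"
      using est by (rule eventually_mono) simp
    show "((\<lambda>i. 4*M/\<rho> * dist (z i) x) \<longlongrightarrow> 0) ufilter"
    proof -
      have "((\<lambda>i. dist (z i) x) \<longlongrightarrow> dist x x) ufilter" by (rule tendsto_dist[OF z tendsto_const])
      from tendsto_mult_left[OF this, of "4*M/\<rho>"] show ?thesis by simp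
    qed
  qed
  from tendsto_add[OF this lim_x] show ?thesis by simp
qed

lemma st_fun_has_derivative:
  assumes F: "bounded_holo_family F" and x: "x \<in> ball a0 R"
  obtains L where "(st_fun F has_derivative L) (at x)" and "\<And>c v. L (c *s v) = c * L v"
    and "\<And>h. ((\<lambda>i. cdir_deriv (F i) x h) \<longlongrightarrow> L h) ufilter"
proof -
  obtain \<rho> M where \<rho>: "\<rho> > 0" "ball x \<rho> \<subseteq> ball a0 R"
    and M: "eventually (\<lambda>i. holo_on (ball x \<rho>) (F i) \<and> (\<forall>w\<in>ball x \<rho>. norm (F i w) \<le> M)) ufilter"
    using bounded_holo_family_near[OF F x] by blast
  have lim: "((\<lambda>i. F i w) \<longlongrightarrow> st_fun F w) ufilter" if "w \<in> ball x \<rho>" for w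
    using tendsto_st_fun[OF F _ tendsto_const] that \<rho>(2) by blast
  show ?thesis
    by (rule holo_family_limit_has_derivative[OF \<rho>(1) M, of "st_fun F"]) (use lim that in auto)
qed

lemma holo_on_st_fun:
  assumes "bounded_holo_family F" shows "holo_on (ball a0 R) (st_fun F)"
  unfolding holo_on_def
proof
  fix x assume "x \<in> ball a0 R"
  from st_fun_has_derivative[OF assms this]
  show "\<exists>L. (st_fun F has_derivative L) (at x) \<and> (\<forall>c v. L (c *s v) = c * L v)" by metis
qed

lemma cpartial_st_fun:
  assumes F: "bounded_holo_family F" and x: "x \<in> ball a0 R"
  shows "cpartial j (st_fun F) x = st_fun (\<lambda>i. cpartial j (F i)) x"
proof -
  obtain L where L: "(st_fun F has_derivative L) (at x)" "\<And>c v. L (c *s v) = c * L v"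
    and conv: "\<And>h. ((\<lambda>i. cdir_deriv (F i) x h) \<longlongrightarrow> L h) ufilter"
    by (rule st_fun_has_derivative[OF F x]) blast
  have "((\<lambda>t. st_fun F (x + t *s axis j 1)) has_field_derivative L (axis j 1)) (at 0)"
    using L by (intro has_field_derivative_along_line) auto
  then have "cpartial j (st_fun F) x = L (axis j 1)"
    unfolding cpartial_eq_cdir_deriv cdir_deriv_def by (rule DERIV_imp_deriv)
  also have "\<dots> = st_fun (\<lambda>i. cpartial j (F i)) x"
    unfolding st_fun_def cpartial_eq_cdir_deriv by (rule hst_eq_if_tendsto[symmetric], rule conv)
  finally show ?thesis .
qed

lemma bounded_holo_family_cpartial_pow:
  assumes "bounded_holo_family H" and "\<forall>x\<in>ball a0 R. K x = st_fun H x"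
  shows "bounded_holo_family (\<lambda>i. (cpartial j ^^ n) (H i))
    \<and> (\<forall>x\<in>ball a0 R. (cpartial j ^^ n) K x = st_fun (\<lambda>i. (cpartial j ^^ n) (H i)) x)"
proof (induction n)
  case 0
  then show ?case using assms by simp
next
  case (Suc n)
  then have H: "bounded_holo_family (\<lambda>i. (cpartial j ^^ n) (H i))"
    and K: "\<forall>x\<in>ball a0 R. (cpartial j ^^ n) K x = st_fun (\<lambda>i. (cpartial j ^^ n) (H i)) x" by auto
  have "cpartial j ((cpartial j ^^ n) K) x = st_fun (\<lambda>i. cpartial j ((cpartial j ^^ n) (H i))) x"
    if x: "x \<in> ball a0 R" for x
  proof -
    have "cpartial j ((cpartial j ^^ n) K) x = cpartial j (st_fun (\<lambda>i. (cpartial j ^^ n) (H i))) x"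
      by (rule cpartial_cong_open[OF open_ball x]) (use K in blast)
    also have "\<dots> = st_fun (\<lambda>i. cpartial j ((cpartial j ^^ n) (H i))) x"
      by (rule cpartial_st_fun[OF H x])
    finally show ?thesis .
  qed
  with bounded_holo_family_cpartial[OF H] show ?case by simp
qed

lemma bounded_holo_family_pd_list:
  assumes "bounded_holo_family F"
  shows "bounded_holo_family (\<lambda>i. pd_list \<alpha> js (F i))
    \<and> (\<forall>x\<in>ball a0 R. pd_list \<alpha> js (st_fun F) x = st_fun (\<lambda>i. pd_list \<alpha> js (F i)) x)"
proof (induction js)
  case Nil
  then show ?case using assms by simp
next
  case (Cons j js)
  then have "bounded_holo_family (\<lambda>i. pd_list \<alpha> js (F i))"
    "\<forall>x\<in>ball a0 R. pd_list \<alpha> js (st_fun F) x = st_fun (\<lambda>i. pd_list \<alpha> js (F i)) x"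
    by auto
  from bounded_holo_family_cpartial_pow[OF this, where j=j and n="\<alpha> j"] show ?case by simp
qed

lemma Sball_memD:
  assumes "z \<in> Sball U a R"
  shows "(z \<longlongrightarrow> hst U z) ufilter" and "hst U z \<in> ball a0 R"
proof -
  obtain d where d: "d < R" "((\<lambda>i. norm (z i - a i)) \<longlongrightarrow> d) ufilter"
    using assms Sball_iff_tendsto by blast
  obtain Ba where Ba: "eventually (\<lambda>i. norm (a i) \<le> Ba) ufilter"
    using a_hbounded hbounded_iff_eventually by blast
  obtain Bd where Bd: "eventually (\<lambda>i. norm (norm (z i - a i)) \<le> Bd) ufilter"
    using tendsto_imp_hbounded[OF d(2)] unfolding hbounded_iff_eventually by blast
  have "eventually (\<lambda>i. norm (z i) \<le> Bd + Ba) ufilter"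
    using Ba Bd
  proof eventually_elim
    case (elim i)
    have "norm (z i) \<le> norm (z i - a i) + norm (a i)" using norm_triangle_sub[of "z i" "a i"] by simp
    then show ?case using elim by simp
  qed
  then have "hbounded U z" unfolding hbounded_iff_eventually by blast
  then show z: "(z \<longlongrightarrow> hst U z) ufilter" by (rule tendsto_hst)
  have "((\<lambda>i. norm (z i - a i)) \<longlongrightarrow> norm (hst U z - a0)) ufilter"
    by (intro tendsto_norm tendsto_diff z tendsto_a0)
  then have "norm (hst U z - a0) = d" using d(2) tendsto_unique[OF ufilter_ne_bot] by blast
  then show "hst U z \<in> ball a0 R" using d(1) by (simp add: dist_norm norm_minus_commute)
qed

lemma shadow_Sball_subset: "shadow U (Sball U a R) \<subseteq> ball a0 R"
proof
  fix x assume "x \<in> shadow U (Sball U a R)"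
  then obtain q where q: "(q \<longlongrightarrow> x) ufilter" "q \<in> Sball U a R"
    unfolding shadow_def halo_def by (auto simp: happrox_hstar_iff_tendsto)
  then have "x = hst U q" using Sball_memD(1)[OF q(2)] tendsto_unique[OF ufilter_ne_bot] by blast
  then show "x \<in> ball a0 R" using Sball_memD(2)[OF q(2)] by simp
qed

context
  fixes f :: "nat \<Rightarrow> complex^'n \<Rightarrow> complex"
  assumes f: "bounded_holo_family f"
begin

lemma Scont_at_Sball:
  assumes z: "z \<in> Sball U a R" shows "Scont_at U B f z"
  unfolding Scont_at_def
proof (intro ballI impI)
  fix w assume "w \<in> B" "happrox U w z"
  then have "((\<lambda>i. (w i - z i) + z i) \<longlongrightarrow> 0 + hst U z) ufilter"
    using Sball_memD(1)[OF z] by (intro tendsto_add) (simp_all add: happrox_iff_tendsto)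
  then have "(w \<longlongrightarrow> hst U z) ufilter" by simp
  from tendsto_diff[OF tendsto_st_fun[OF f Sball_memD(2)[OF z] this]
      tendsto_st_fun[OF f Sball_memD(2)[OF z] Sball_memD(1)[OF z]]]
  show "happrox U (happ f w) (happ f z)" by (simp add: happrox_iff_tendsto happ_def)
qed

lemma approx_st_fun_hst:
  assumes z: "z \<in> Sball U a R" shows "happrox U (happ f z) (hstar (st_fun f (hst U z)))"
  unfolding happrox_hstar_iff_tendsto happ_def
  by (rule tendsto_st_fun[OF f Sball_memD(2)[OF z] Sball_memD(1)[OF z]])

lemma approx_pdiff_st_fun:
  assumes x: "x \<in> ball a0 R" and z: "z \<in> halo U (hstar x)"
  shows "happrox U (happ (\<lambda>i. pdiff \<alpha> (f i)) z) (hstar (pdiff \<alpha> (st_fun f) x))"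
proof -
  let ?js = "SOME js :: 'n list. distinct js \<and> set js = UNIV"
  note pd = bounded_holo_family_pd_list[OF f, of \<alpha> ?js]
  have "(z \<longlongrightarrow> x) ufilter" using z by (simp add: halo_def happrox_hstar_iff_tendsto)
  from tendsto_st_fun[OF conjunct1[OF pd] x this] show ?thesis
    using conjunct2[OF pd] x unfolding happrox_hstar_iff_tendsto happ_def pdiff_def by simp
qed

lemma tendsto_f_a: "((\<lambda>i. f i (a i)) \<longlongrightarrow> st_fun f a0) ufilter"
  using tendsto_st_fun[OF f _ tendsto_a0] R_pos by simp

lemma approx_f_a_iff: "happrox U w (happ f a) \<longleftrightarrow> (w \<longlongrightarrow> st_fun f a0) ufilter"
  unfolding happrox_iff_tendsto happ_def
proof
  assume "((\<lambda>i. w i - f i (a i)) \<longlongrightarrow> 0) ufilter"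
  from tendsto_add[OF this tendsto_f_a] show "(w \<longlongrightarrow> st_fun f a0) ufilter" by simp
next
  assume "(w \<longlongrightarrow> st_fun f a0) ufilter"
  from tendsto_diff[OF this tendsto_f_a] show "((\<lambda>i. w i - f i (a i)) \<longlongrightarrow> 0) ufilter" by simp
qed

lemma approx_f_a_if_eqU:
  assumes z: "z \<in> halo U a" and w: "eqU U (happ f z) w"
  shows "happrox U w (happ f a)"
proof -
  have "((\<lambda>i. (z i - a i) + a i) \<longlongrightarrow> 0 + a0) ufilter"
    using z tendsto_a0 by (intro tendsto_add) (simp_all add: halo_def happrox_iff_tendsto)
  then have "(z \<longlongrightarrow> a0) ufilter" by simp
  then have "((\<lambda>i. f i (z i)) \<longlongrightarrow> st_fun f a0) ufilter" using tendsto_st_fun[OF f] R_pos by simp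
  moreover have "eventually (\<lambda>i. f i (z i) = w i) ufilter"
    using w by (simp add: eqU_def happ_def eventually_ufilter)
  ultimately have "(w \<longlongrightarrow> st_fun f a0) ufilter" by (rule Lim_transform_eventually)
  then show ?thesis by (simp add: approx_f_a_iff)
qed

subsection \<open>Values near \<open>f a\<close> are attained in the halo\<close>

text \<open>Otherwise the bad shifts would converge along the ultrafilter to a bad shift in \<open>K\<close>.\<close>

lemma eventually_uniform_lower_bound:
  assumes K: "compact K" "\<And>h. h \<in> K \<Longrightarrow> a0 + h \<in> ball a0 R"
    and lb: "\<And>h. h \<in> K \<Longrightarrow> \<delta> \<le> norm (st_fun f (a0 + h) - L)" and \<delta>: "\<delta> > 0"
    and w: "(w \<longlongrightarrow> L) ufilter"
  shows "eventually (\<lambda>i. \<forall>h\<in>K. \<delta>/2 \<le> norm (f i (a i + h) - w i)) ufilter"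
proof (rule ccontr)
  assume "\<not> ?thesis"
  from eventually_ufilter_not[OF this]
  have "eventually (\<lambda>i. \<exists>h. h \<in> K \<and> norm (f i (a i + h) - w i) < \<delta>/2) ufilter"
    by (rule eventually_mono) (auto simp: not_le)
  then have bad: "eventually (\<lambda>i. hs i \<in> K \<and> norm (f i (a i + hs i) - w i) < \<delta>/2) ufilter"
    if "hs = (\<lambda>i. SOME h. h \<in> K \<and> norm (f i (a i + h) - w i) < \<delta>/2)" for hs
    unfolding that by (rule eventually_mono) (rule someI_ex)
  define hs where "hs = (\<lambda>i. SOME h. h \<in> K \<and> norm (f i (a i + h) - w i) < \<delta>/2)"
  note bad = bad[OF hs_def]
  obtain B where "\<forall>h\<in>K. norm h \<le> B" using compact_imp_bounded[OF K(1)] bounded_iff by blast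
  with bad have "eventually (\<lambda>i. norm (hs i) \<le> B) ufilter" by (auto elim: eventually_mono)
  then have "hbounded U hs" unfolding hbounded_iff_eventually by blast
  then obtain h where h: "(hs \<longlongrightarrow> h) ufilter" using hbounded_imp_convergent by blast
  have "eventually (\<lambda>i. hs i \<in> K) ufilter" using bad by (rule eventually_mono) simp
  from Lim_in_closed_set[OF compact_imp_closed[OF K(1)] this ufilter_ne_bot h] have hK: "h \<in> K" .
  have "((\<lambda>i. a i + hs i) \<longlongrightarrow> a0 + h) ufilter" by (rule tendsto_add[OF tendsto_a0 h])
  from tendsto_norm[OF tendsto_diff[OF tendsto_st_fun[OF f K(2)[OF hK] this] w]]
  have "((\<lambda>i. norm (f i (a i + hs i) - w i)) \<longlongrightarrow> norm (st_fun f (a0 + h) - L)) ufilter" .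
  moreover have "eventually (\<lambda>i. norm (f i (a i + hs i) - w i) \<le> \<delta>/2) ufilter"
    using bad by (rule eventually_mono) simp
  ultimately have "norm (st_fun f (a0 + h) - L) \<le> \<delta>/2" by (rule tendsto_upperbound[OF _ _ ufilter_ne_bot])
  then show False using lb[OF hK] \<delta> by simp
qed

text \<open>Rouche-type argument: on the circle \<open>f i (a i + t v)\<close> stays \<open>\<delta>/2\<close> away from \<open>w i\<close>,
  at the centre it is closer than \<open>\<delta>/2\<close>, so the minimum modulus principle yields a zero.\<close>

lemma eventually_exists_preimage_on_line:
  assumes w: "(w \<longlongrightarrow> st_fun f a0) ufilter" and \<rho>: "0 < \<rho>" "\<rho> * norm v < R"
    and ne: "\<And>t. norm t = \<rho> \<Longrightarrow> st_fun f (a0 + t *s v) \<noteq> st_fun f a0"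
  shows "eventually (\<lambda>i. \<exists>t. norm t \<le> \<rho> \<and> f i (a i + t *s v) = w i) ufilter"
proof -
  have "(\<lambda>t. a0 + t *s v) ` sphere 0 \<rho> \<subseteq> ball a0 R" using line_in_ball[OF _ \<rho>(2)] by auto
  moreover have "continuous_on (sphere 0 \<rho>) (\<lambda>t. a0 + t *s v)"
    by (intro continuous_intros linear_continuous_on bounded_linear_smult_vec_left)
  ultimately have "continuous_on (sphere 0 \<rho>) (\<lambda>t. st_fun f (a0 + t *s v))"
    by (intro continuous_on_compose2[OF holo_on_imp_continuous_on[OF holo_on_st_fun[OF f]]])
  then have "continuous_on (sphere 0 \<rho>) (\<lambda>t. st_fun f (a0 + t *s v) - st_fun f a0)"
    by (intro continuous_intros)
  then have "\<exists>\<delta>>0. \<forall>t\<in>sphere 0 \<rho>. \<delta> \<le> norm (st_fun f (a0 + t *s v) - st_fun f a0)"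
    by (rule compact_norm_lower_bound[OF compact_sphere]) (use ne in simp)
  then obtain \<delta> where \<delta>: "\<delta> > 0" "\<forall>t\<in>sphere 0 \<rho>. \<delta> \<le> norm (st_fun f (a0 + t *s v) - st_fun f a0)"
    by blast
  have "eventually (\<lambda>i. \<forall>h\<in>(\<lambda>t. t *s v) ` sphere 0 \<rho>. \<delta>/2 \<le> norm (f i (a i + h) - w i)) ufilter"
  proof (rule eventually_uniform_lower_bound[OF _ _ _ \<delta>(1) w])
    show "compact ((\<lambda>t. t *s v) ` sphere 0 \<rho>)"
      by (intro compact_continuous_image compact_sphere linear_continuous_on bounded_linear_smult_vec_left)
    show "\<And>h. h \<in> (\<lambda>t. t *s v) ` sphere 0 \<rho> \<Longrightarrow> a0 + h \<in> ball a0 R"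
      using line_in_ball[OF _ \<rho>(2)] by auto
    show "\<And>h. h \<in> (\<lambda>t. t *s v) ` sphere 0 \<rho> \<Longrightarrow> \<delta> \<le> norm (st_fun f (a0 + h) - st_fun f a0)"
      using \<delta>(2) by auto
  qed
  then have circle: "eventually (\<lambda>i. \<forall>t. norm t = \<rho> \<longrightarrow> \<delta>/2 \<le> norm (f i (a i + t *s v) - w i)) ufilter"
    by (rule eventually_mono) auto
  have "eventually (\<lambda>i. dist (f i (a i) - w i) (st_fun f a0 - st_fun f a0) < \<delta>/2) ufilter"
    using tendsto_diff[OF tendsto_f_a w] \<delta>(1) unfolding tendsto_iff by (meson half_gt_zero)
  then have centre: "eventually (\<lambda>i. norm (f i (a i) - w i) < \<delta>/2) ufilter"
    by (rule eventually_mono) (simp add: dist_norm)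
  have "0 < R/2 \<and> R/2 < R" using R_pos by simp
  from f[unfolded bounded_holo_family_def, rule_format, OF this]
  obtain M where "eventually (\<lambda>i. holo_on (ball (a i) R) (f i)
      \<and> (\<forall>w\<in>cball (a i) (R/2). norm (f i w) \<le> M)) ufilter" ..
  then have hol: "eventually (\<lambda>i. holo_on (ball (a i) R) (f i)) ufilter" by (rule eventually_mono) blast
  from circle centre hol show ?thesis
  proof eventually_elim
    case (elim i)
    have "cball 0 \<rho> \<subseteq> {t. a i + t *s v \<in> ball (a i) R}" using line_in_ball[OF _ \<rho>(2)] by auto
    then have "(\<lambda>t. f i (a i + t *s v) - w i) holomorphic_on cball 0 \<rho>"
      by (intro holomorphic_intros holomorphic_on_subset[OF holomorphic_on_line[OF elim(3)]])
    from holomorphic_has_zero_if_small_centre[OF this \<rho>(1), of "\<delta>/2"] elim(1,2)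
    show ?case by simp
  qed
qed

lemma halo_image_surj:
  assumes nc: "\<not> (\<exists>c. \<forall>x\<in>shadow U (Sball U a R). st_fun f x = c)"
    and w: "(w \<longlongrightarrow> st_fun f a0) ufilter"
  shows "\<exists>z\<in>halo U a. eqU U (happ f z) w"
proof -
  obtain x1 where x1: "x1 \<in> ball a0 R" "st_fun f x1 \<noteq> st_fun f a0"
    using nc shadow_Sball_subset by blast
  obtain v r where vr: "0 < r" "r * norm v < R"
    "\<And>t. norm t \<le> r \<Longrightarrow> t \<noteq> 0 \<Longrightarrow> st_fun f (a0 + t *s v) \<noteq> st_fun f a0"
    by (rule holo_on_isolated_value_on_line[OF holo_on_st_fun[OF f] x1]) blast
  have "eventually (\<lambda>i. \<exists>t. norm t \<le> r/(real n+1) \<and> f i (a i + t *s v) = w i) ufilter" for n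
  proof (rule eventually_exists_preimage_on_line[OF w])
    have "r/(real n+1) \<le> r" using vr(1) by (simp add: field_simps)
    then show "r/(real n+1) * norm v < R" using vr(2) mult_right_mono[of "r/(real n+1)" r "norm v"] by simp
    show "0 < r/(real n+1)" using vr(1) by simp
    fix t :: complex assume "norm t = r/(real n+1)"
    then have "norm t \<le> r" "t \<noteq> 0" using \<open>r/(real n+1) \<le> r\<close> \<open>0 < r/(real n+1)\<close> by auto
    then show "st_fun f (a0 + t *s v) \<noteq> st_fun f a0" by (rule vr(3))
  qed
  then obtain k tt where ktt: "\<And>m. eventually (\<lambda>i. m \<le> k i
      \<and> norm (tt i) \<le> r/(real (k i)+1) \<and> f i (a i + tt i *s v) = w i) ufilter"
    by (rule ufilter_diagonal[where P="\<lambda>n i t. norm t \<le> r/(real n+1) \<and> f i (a i + t *s v) = w i"]) blast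
  have "eventually (\<lambda>i. norm (tt i) \<le> r/(real m+1)) ufilter" for m
    using ktt[of m]
  proof eventually_elim
    case (elim i)
    then have "r/(real (k i)+1) \<le> r/(real m+1)" using vr(1) by (intro divide_left_mono) auto
    with elim show ?case by linarith
  qed
  then have "(tt \<longlongrightarrow> 0) ufilter" by (rule tendsto_0_if_eventually_le_divide_Suc[OF vr(1)])
  from bounded_linear.tendsto[OF bounded_linear_smult_vec_left this, of v]
  have "(\<lambda>i. a i + tt i *s v) \<in> halo U a" by (simp add: halo_def happrox_iff_tendsto)
  moreover have "eventually (\<lambda>i. f i (a i + tt i *s v) = w i) ufilter"
    using ktt[of 0] by (rule eventually_mono) blast
  then have "eqU U (happ f (\<lambda>i. a i + tt i *s v)) w" by (simp add: eqU_def happ_def eventually_ufilter)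
  ultimately show ?thesis by blast
qed

lemma halo_image_eq:
  assumes "\<not> (\<exists>c. \<forall>x\<in>shadow U (Sball U a R). st_fun f x = c)"
  shows "happrox U w (happ f a) \<longleftrightarrow> (\<exists>z\<in>halo U a. eqU U (happ f z) w)"
  using halo_image_surj[OF assms] approx_f_a_iff approx_f_a_if_eqU by blast

end

end

theorem theorem2p2p1:
  fixes U :: "nat set set"
    and B :: "(nat \<Rightarrow> complex ^ 'n::finite) set"
    and a :: "nat \<Rightarrow> complex ^ 'n"
    and D :: "nat \<Rightarrow> (complex ^ 'n) set"
    and f :: "nat \<Rightarrow> complex ^ 'n \<Rightarrow> complex"
  assumes U: "nonprincipal_ultrafilter U"
    and B_open: "Sopen U B"
    and aB: "a \<in> B"
    and a_bdd: "hbounded U a"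
    and B_dom: "B \<subseteq> internal_set U D"
    and f_hol: "internal_holomorphic U D f"
    and f_bdd: "\<forall>z \<in> halo U a. hbounded U (happ f z)"
  shows "\<exists>V. Sopen U V \<and> a \<in> V \<and> V \<subseteq> B
    \<and> (\<forall>z\<in>V. Scont_at U B f z)
    \<and> (\<exists>g :: complex ^ 'n \<Rightarrow> complex.
          holo_on (shadow U V) g
        \<and> (\<forall>z\<in>V. hbounded U z \<longrightarrow> hst U z \<in> shadow U V \<longrightarrow>
              happrox U (happ f z) (hstar (g (hst U z))))
        \<and> (\<forall>\<alpha> :: 'n \<Rightarrow> nat. \<forall>x \<in> shadow U V. \<forall>z \<in> halo U (hstar x).
              happrox U (happ (\<lambda>i. pdiff \<alpha> (f i)) z) (hstar (pdiff \<alpha> g x)))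
        \<and> ((\<not> (\<exists>c. \<forall>x \<in> shadow U V. g x = c)) \<longrightarrow>
              (\<forall>w. happrox U w (happ f a) \<longleftrightarrow> (\<exists>z \<in> halo U a. eqU U (happ f z) w))))"
proof -
  interpret nonprincipal_uf U by unfold_locales (fact U)
  obtain R M where R: "R > 0" "Sball U a R \<subseteq> B"
    and hb: "eventually (\<lambda>i. holo_on (ball (a i) R) (f i) \<and> (\<forall>w\<in>ball (a i) R. norm (f i w) \<le> M)) ufilter"
    by (rule exists_radius_holo_bounded[OF B_open aB B_dom f_hol f_bdd]) blast
  interpret halo_ball U a R by unfold_locales (rule a_bdd, rule R(1))
  have f: "bounded_holo_family f" using hb by (rule bounded_holo_familyI)
  define V where "V = Sball U a R"
  have shV: "shadow U V \<subseteq> ball a0 R" unfolding V_def by (rule shadow_Sball_subset)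
  show ?thesis
  proof (intro exI[of _ V] conjI exI[of _ "st_fun f"])
    show "Sopen U V" "a \<in> V" "V \<subseteq> B" using Sopen_Sball centre_in_Sball R unfolding V_def by auto
    show "\<forall>z\<in>V. Scont_at U B f z" using Scont_at_Sball[OF f] unfolding V_def by blast
    show "holo_on (shadow U V) (st_fun f)" using holo_on_subset[OF holo_on_st_fun[OF f] shV] .
    show "\<forall>z\<in>V. hbounded U z \<longrightarrow> hst U z \<in> shadow U V \<longrightarrow>
        happrox U (happ f z) (hstar (st_fun f (hst U z)))"
      using approx_st_fun_hst[OF f] unfolding V_def by blast
    show "\<forall>\<alpha> :: 'n \<Rightarrow> nat. \<forall>x \<in> shadow U V. \<forall>z \<in> halo U (hstar x).
        happrox U (happ (\<lambda>i. pdiff \<alpha> (f i)) z) (hstar (pdiff \<alpha> (st_fun f) x))"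
      using approx_pdiff_st_fun[OF f] shV by blast
    show "\<not> (\<exists>c. \<forall>x \<in> shadow U V. st_fun f x = c) \<longrightarrow>
        (\<forall>w. happrox U w (happ f a) \<longleftrightarrow> (\<exists>z \<in> halo U a. eqU U (happ f z) w))"
      using halo_image_eq[OF f] unfolding V_def by blast
  qed
qed

end
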